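(* Let $G=(V,E)$ be an almost tree (2). Then the diameter of the 1-skeleton of $\mathrm{CUT}(G)$ satisfies $$\left\lfloor \frac{|V|}{3}\right\rfloor \le d(\mathrm{CUT}(G)) \le |V|-1.$$
   Context: For an undirected graph $G=(V,E)$ and $S\subseteq V$, $\delta(S)\subseteq E$ denotes the set of edges with exactly one endpoint in $S$, and $\mathbf v(S)\in\{0,1\}^{E}$ is its incidence vector ($v(S)_e=1$ iff $e\in\delta(S)$). The cut polytope is $\mathrm{CUT}(G)=\operatorname{conv}\{\mathbf v(S):S\subseteq V\}\subset\mathbb R^{E}$. The 1-skeleton of a polytope is the graph whose vertices are the polytope's vertices and whose edges are its one-dimensional faces; $d(\cdot)$ denotes its diameter. A connected graph is an almost tree ($k$) if every biconnected component (maximal subgraph that remains connected after removal of any single vertex) has at most $k$ edges not belonging to a spanning tree of that component. *)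

theory Defs
  imports "HOL-Analysis.Analysis"
begin

definition simple_graph :: "'v set \<Rightarrow> 'v set set \<Rightarrow> bool" where
  "simple_graph V E \<longleftrightarrow> finite V \<and> (\<forall>e\<in>E. \<exists>x y. x \<noteq> y \<and> x \<in> V \<and> y \<in> V \<and> e = {x, y})"

definition connected_on :: "'v set \<Rightarrow> 'v set set \<Rightarrow> bool" where
  "connected_on W F \<longleftrightarrow> (\<forall>x\<in>W. \<forall>y\<in>W. (\<lambda>a b. {a, b} \<in> F)\<^sup>*\<^sup>* x y)"

definition connected_graph :: "'v set \<Rightarrow> 'v set set \<Rightarrow> bool" where
  "connected_graph V E \<longleftrightarrow> simple_graph V E \<and> V \<noteq> {} \<and> connected_on V E"

definition subgraph_of :: "'v set \<Rightarrow> 'v set set \<Rightarrow> 'v set \<Rightarrow> 'v set set \<Rightarrow> bool" where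
  "subgraph_of W F V E \<longleftrightarrow> W \<subseteq> V \<and> F \<subseteq> E \<and> (\<forall>e\<in>F. e \<subseteq> W)"

definition biconnected_sub :: "'v set \<Rightarrow> 'v set set \<Rightarrow> 'v set \<Rightarrow> 'v set set \<Rightarrow> bool" where
  "biconnected_sub V E W F \<longleftrightarrow> subgraph_of W F V E \<and> connected_on W F \<and>
     (\<forall>w\<in>W. connected_on (W - {w}) {e\<in>F. w \<notin> e})"

definition biconnected_component :: "'v set \<Rightarrow> 'v set set \<Rightarrow> 'v set \<Rightarrow> 'v set set \<Rightarrow> bool" where
  "biconnected_component V E W F \<longleftrightarrow> biconnected_sub V E W F \<and>
     (\<forall>W' F'. biconnected_sub V E W' F' \<and> W \<subseteq> W' \<and> F \<subseteq> F' \<longrightarrow> W' = W \<and> F' = F)"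

definition spanning_tree :: "'v set \<Rightarrow> 'v set set \<Rightarrow> 'v set set \<Rightarrow> bool" where
  "spanning_tree W F T \<longleftrightarrow> T \<subseteq> F \<and> connected_on W T \<and> (\<forall>e\<in>T. \<not> connected_on W (T - {e}))"

definition almost_tree :: "nat \<Rightarrow> 'v set \<Rightarrow> 'v set set \<Rightarrow> bool" where
  "almost_tree k V E \<longleftrightarrow> connected_graph V E \<and>
     (\<forall>W F. biconnected_component V E W F \<longrightarrow> (\<exists>T. spanning_tree W F T \<and> card (F - T) \<le> k))"

text \<open>R^E is embedded in real^('v set) (coordinates outside E are 0).\<close>
definition cut_vec :: "'v set set \<Rightarrow> 'v set \<Rightarrow> real ^ ('v::finite set)" where
  "cut_vec E S = (\<chi> e. if e \<in> E \<and> card (e \<inter> S) = 1 then 1 else 0)"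

definition cut_polytope :: "'v set \<Rightarrow> 'v set set \<Rightarrow> (real ^ ('v::finite set)) set" where
  "cut_polytope V E = convex hull {cut_vec E S | S. S \<subseteq> V}"

definition skel_vertices :: "'a::euclidean_space set \<Rightarrow> 'a set" where
  "skel_vertices P = {x. x extreme_point_of P}"

definition skel_adj :: "'a::euclidean_space set \<Rightarrow> 'a \<Rightarrow> 'a \<Rightarrow> bool" where
  "skel_adj P x y \<longleftrightarrow> x \<noteq> y \<and>
     (\<exists>F. F face_of P \<and> aff_dim F = 1 \<and> x extreme_point_of F \<and> y extreme_point_of F)"

definition skel_dist :: "'a::euclidean_space set \<Rightarrow> 'a \<Rightarrow> 'a \<Rightarrow> nat" where
  "skel_dist P x y = (LEAST n. (skel_adj P ^^ n) x y)"

definition skel_diameter :: "'a::euclidean_space set \<Rightarrow> nat" where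
  "skel_diameter P = Max {skel_dist P x y | x y. x \<in> skel_vertices P \<and> y \<in> skel_vertices P}"

end

theory Submission
  imports Defs
begin

text \<open>
  Upper bound: if D and V - D both induce connected subgraphs, the cut vectors of S and of
  S \<triangle> D are the only vertices of the face fixing all coordinates outside the bond of D, so
  they are adjacent. Adding the vertices of the connected graph one at a time, every cut is
  reached from any other by at most |V| - 1 such flips.

  Lower bound: conversely, adjacent cut vectors always differ by such a flip, since otherwise
  D splits into two parts D1, D2 with v(S) + v(S \<triangle> D) = v(S \<triangle> D1) + v(S \<triangle> D2).
  In an almost tree (k) the bond of such a D has at most k + 1 edges: the cycles through one
  bond edge and each other one glue to a biconnected subgraph whose cyclomatic number is at
  least the size of the bond minus one. Hence each step of the skeleton changes at most k + 1
  coordinates, while some cut (a BFS parity cut) has |V| - 1 edges and the empty cut none.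
\<close>

abbreviation edge_rel :: "'v set set \<Rightarrow> 'v \<Rightarrow> 'v \<Rightarrow> bool" where
  "edge_rel F \<equiv> (\<lambda>a b. {a, b} \<in> F)"

abbreviation induced_edges :: "'v set set \<Rightarrow> 'v set \<Rightarrow> 'v set set" where
  "induced_edges E D \<equiv> {e\<in>E. e \<subseteq> D}"

abbreviation cut_edges :: "'v set set \<Rightarrow> 'v set \<Rightarrow> 'v set set" where
  "cut_edges E D \<equiv> {e\<in>E. card (e \<inter> D) = 1}"

lemma edge_rel_rtranclp_sym: "(edge_rel F)\<^sup>*\<^sup>* a b \<Longrightarrow> (edge_rel F)\<^sup>*\<^sup>* b a"
proof (induction rule: rtranclp_induct)
  case (step y z)
  then have "edge_rel F z y" by (simp add: insert_commute)
  then show ?case using step.IH by (rule converse_rtranclp_into_rtranclp)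
qed simp

lemma edge_rel_rtranclp_mono: "(edge_rel F)\<^sup>*\<^sup>* a b \<Longrightarrow> F \<subseteq> F' \<Longrightarrow> (edge_rel F')\<^sup>*\<^sup>* a b"
  by (induction rule: rtranclp_induct) (auto intro: rtranclp.rtrancl_into_rtrancl)

lemma edge_rel_rtranclp_isolated: "(edge_rel F)\<^sup>*\<^sup>* v w \<Longrightarrow> \<forall>e\<in>F. w \<notin> e \<Longrightarrow> v = w"
  by (induction rule: rtranclp_induct) auto

lemma edge_rel_rtranclp_crossing_edge:
  assumes "(edge_rel E)\<^sup>*\<^sup>* a b" "a \<in> W" "b \<notin> W"
  obtains p q where "{p, q} \<in> E" "p \<in> W" "q \<notin> W"
  using assms by (induction rule: rtranclp_induct) blast+

lemma connected_onD: "connected_on W F \<Longrightarrow> x \<in> W \<Longrightarrow> y \<in> W \<Longrightarrow> (edge_rel F)\<^sup>*\<^sup>* x y"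
  unfolding connected_on_def by blast

lemma connected_onI_root:
  assumes "\<forall>v\<in>W. (edge_rel F)\<^sup>*\<^sup>* v r"
  shows "connected_on W F"
  unfolding connected_on_def
  using assms by (blast intro: rtranclp_trans edge_rel_rtranclp_sym)

lemma connected_on_mono: "connected_on W F \<Longrightarrow> F \<subseteq> F' \<Longrightarrow> connected_on W F'"
  unfolding connected_on_def by (blast intro: edge_rel_rtranclp_mono)

lemma connected_on_singleton: "connected_on {w} F"
  unfolding connected_on_def by simp

lemma connected_on_insert:
  assumes "connected_on X (induced_edges E X)" "b \<in> X" "{w, b} \<in> E"
  shows "connected_on (insert w X) (induced_edges E (insert w X))"
proof (rule connected_onI_root[where r = b], intro ballI)
  fix v assume v: "v \<in> insert w X"
  show "(edge_rel (induced_edges E (insert w X)))\<^sup>*\<^sup>* v b"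
  proof (cases "v \<in> X")
    case True
    then show ?thesis
      using connected_onD[OF assms(1) _ assms(2)] by (blast intro: edge_rel_rtranclp_mono)
  next
    case False
    then show ?thesis using v assms(2,3) by auto
  qed
qed

lemma connected_on_const:
  assumes "connected_on D (induced_edges E D)"
    and "\<And>p q. {p, q} \<in> E \<Longrightarrow> {p, q} \<subseteq> D \<Longrightarrow> t p = t q"
    and "p \<in> D" "q \<in> D"
  shows "t p = t q"
  using connected_onD[OF assms(1) assms(3,4)]
  by (induction rule: rtranclp_induct) (use assms(2) in auto)

fun walk :: "'v set set \<Rightarrow> 'v list \<Rightarrow> bool" where
  "walk F [] = False"
| "walk F [x] = True"
| "walk F (x # y # ys) = ({x, y} \<in> F \<and> walk F (y # ys))"

fun walk_edges :: "'v list \<Rightarrow> 'v set set" where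
  "walk_edges [] = {}"
| "walk_edges [x] = {}"
| "walk_edges (x # y # ys) = insert {x, y} (walk_edges (y # ys))"

lemma walk_nonempty: "walk F xs \<Longrightarrow> xs \<noteq> []"
  by auto

lemma walk_edges_subset: "walk F xs \<Longrightarrow> walk_edges xs \<subseteq> F"
  by (induction xs rule: walk_edges.induct) auto

lemma walk_mono: "walk F xs \<Longrightarrow> F \<subseteq> F' \<Longrightarrow> walk F' xs"
  by (induction xs rule: walk_edges.induct) auto

lemma walk_edge_subset_set: "e \<in> walk_edges xs \<Longrightarrow> e \<subseteq> set xs"
  by (induction xs rule: walk_edges.induct) auto

lemma walk_Cons_intro: "walk F ys \<Longrightarrow> {x, hd ys} \<in> F \<Longrightarrow> walk F (x # ys)"
  by (cases ys) auto

lemma walk_append: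
  "xs \<noteq> [] \<Longrightarrow> ys \<noteq> [] \<Longrightarrow> walk F (xs @ ys) \<longleftrightarrow> walk F xs \<and> walk F ys \<and> {last xs, hd ys} \<in> F"
  by (induction xs rule: walk_edges.induct) (auto simp: neq_Nil_conv)

lemma walk_edges_append:
  "xs \<noteq> [] \<Longrightarrow> ys \<noteq> [] \<Longrightarrow> walk_edges (xs @ ys) = walk_edges xs \<union> walk_edges ys \<union> {{last xs, hd ys}}"
  by (induction xs rule: walk_edges.induct) (auto simp: neq_Nil_conv)

lemma walk_set_subset: "walk F xs \<Longrightarrow> \<forall>e\<in>F. e \<subseteq> U \<Longrightarrow> hd xs \<in> U \<Longrightarrow> set xs \<subseteq> U"
proof (induction xs rule: walk_edges.induct)
  case (3 x y ys)
  then have "y \<in> U" by auto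
  then show ?case using 3 by simp
qed auto

lemma rtranclp_edge_rel_imp_walk:
  "(edge_rel F)\<^sup>*\<^sup>* x y \<Longrightarrow> \<exists>xs. walk F xs \<and> distinct xs \<and> hd xs = x \<and> last xs = y"
proof (induction rule: converse_rtranclp_induct)
  case base
  then show ?case by (intro exI[of _ "[y]"]) auto
next
  case (step x z)
  then obtain ys where ys: "walk F ys" "distinct ys" "hd ys = z" "last ys = y" by auto
  show ?case
  proof (cases "x \<in> set ys")
    case False
    then show ?thesis using ys step(1) walk_nonempty[OF ys(1)]
      by (intro exI[of _ "x # ys"]) (auto intro: walk_Cons_intro)
  next
    case True
    then obtain as bs where ys_eq: "ys = as @ x # bs" by (meson split_list)
    then have "walk F (x # bs)"
      using ys(1) by (cases "as = []") (auto simp: walk_append)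
    then show ?thesis using ys ys_eq by (intro exI[of _ "x # bs"]) auto
  qed
qed

lemma walk_reaches_hd: "walk F xs \<Longrightarrow> v \<in> set xs \<Longrightarrow> (edge_rel (walk_edges xs))\<^sup>*\<^sup>* v (hd xs)"
proof (induction xs rule: walk_edges.induct)
  case (3 x y ys)
  show ?case
  proof (cases "v = x")
    case False
    then have "(edge_rel (walk_edges (y # ys)))\<^sup>*\<^sup>* v y" using 3 by auto
    then have "(edge_rel (walk_edges (x # y # ys)))\<^sup>*\<^sup>* v y"
      by (rule edge_rel_rtranclp_mono) auto
    moreover have "edge_rel (walk_edges (x # y # ys)) y x" by (simp add: insert_commute)
    ultimately show ?thesis by (simp add: rtranclp.rtrancl_into_rtrancl)
  qed simp
qed auto

lemma walk_reaches_last: "walk F xs \<Longrightarrow> v \<in> set xs \<Longrightarrow> (edge_rel (walk_edges xs))\<^sup>*\<^sup>* v (last xs)"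
proof (induction xs arbitrary: v rule: walk_edges.induct)
  case (3 x y ys)
  have IH: "(edge_rel (walk_edges (x # y # ys)))\<^sup>*\<^sup>* u (last (y # ys))" if "u \<in> set (y # ys)" for u
  proof -
    have "walk F (y # ys)" using 3(2) by simp
    from 3(1)[OF this that] have "(edge_rel (walk_edges (y # ys)))\<^sup>*\<^sup>* u (last (y # ys))" .
    then show ?thesis by (rule edge_rel_rtranclp_mono) auto
  qed
  show ?case
  proof (cases "v = x")
    case True
    have "edge_rel (walk_edges (x # y # ys)) x y" by simp
    from converse_rtranclp_into_rtranclp[OF this IH[of y]] show ?thesis using True by simp
  next
    case False
    with IH[of v] show ?thesis using 3(3) by simp
  qed
qed auto

lemma walk_avoiding_reaches_hd_or_last:
  assumes "walk F xs" "distinct xs" "w \<in> set xs" "v \<in> set xs" "v \<noteq> w"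
  shows "(edge_rel {e \<in> walk_edges xs. w \<notin> e})\<^sup>*\<^sup>* v (hd xs) \<or>
         (edge_rel {e \<in> walk_edges xs. w \<notin> e})\<^sup>*\<^sup>* v (last xs)"
  using assms
proof (induction xs rule: walk_edges.induct)
  case (3 x y ys)
  let ?G = "{e \<in> walk_edges (x # y # ys). w \<notin> e}"
  show ?case
  proof (cases "w = x")
    case True
    then have "v \<in> set (y # ys)" using 3 by auto
    then have "(edge_rel (walk_edges (y # ys)))\<^sup>*\<^sup>* v (last (y # ys))"
      using 3 by (intro walk_reaches_last) auto
    moreover have "walk_edges (y # ys) \<subseteq> ?G"
      using 3(3) True walk_edge_subset_set[of _ "y # ys"] by auto
    ultimately show ?thesis by (auto dest: edge_rel_rtranclp_mono)
  next
    case wx: False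
    show ?thesis
    proof (cases "v = x")
      case False
      then have vw: "v \<in> set (y # ys)" "w \<in> set (y # ys)" using 3 wx by auto
      have sub: "{e \<in> walk_edges (y # ys). w \<notin> e} \<subseteq> ?G" by auto
      from 3(1)[OF _ _ vw(2) vw(1) 3(6)] 3(2,3)
      consider "(edge_rel {e \<in> walk_edges (y # ys). w \<notin> e})\<^sup>*\<^sup>* v y"
        | "(edge_rel {e \<in> walk_edges (y # ys). w \<notin> e})\<^sup>*\<^sup>* v (last (y # ys))" by auto
      then show ?thesis
      proof cases
        case 1
        have "w \<noteq> y"
        proof
          assume "w = y"
          with edge_rel_rtranclp_isolated[OF 1] have "v = w" by blast
          with 3(6) show False ..
        qed
        then have "edge_rel ?G y x" using wx by (auto simp: insert_commute)
        from rtranclp.rtrancl_into_rtrancl[OF edge_rel_rtranclp_mono[OF 1 sub] this]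
        show ?thesis by simp
      next
        case 2
        from edge_rel_rtranclp_mono[OF 2 sub] show ?thesis by simp
      qed
    qed simp
  qed
qed auto

lemma walk_reaches_end_avoiding:
  assumes "walk F P" "distinct P" "v \<in> set P" "v \<noteq> w" "{e \<in> walk_edges P. w \<notin> e} \<subseteq> F'"
  shows "\<exists>z\<in>{hd P, last P} - {w}. (edge_rel F')\<^sup>*\<^sup>* v z"
proof (cases "w \<in> set P")
  case True
  from walk_avoiding_reaches_hd_or_last[OF assms(1,2) True assms(3,4)]
  obtain z where z: "z \<in> {hd P, last P}" "(edge_rel {e \<in> walk_edges P. w \<notin> e})\<^sup>*\<^sup>* v z"
    by auto
  have "z \<noteq> w"
  proof
    assume "z = w"
    with edge_rel_rtranclp_isolated[OF z(2)] have "v = w" by blast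
    with assms(4) show False ..
  qed
  with z edge_rel_rtranclp_mono[OF z(2) assms(5)] show ?thesis by blast
next
  case False
  have "walk_edges P \<subseteq> F'" using assms(5) False walk_edge_subset_set by fastforce
  with walk_reaches_hd[OF assms(1,3)] have "(edge_rel F')\<^sup>*\<^sup>* v (hd P)"
    by (rule edge_rel_rtranclp_mono)
  moreover have "hd P \<noteq> w" using False hd_in_set[OF walk_nonempty[OF assms(1)]] by auto
  ultimately show ?thesis by blast
qed

lemma walk_connects_ends_avoiding:
  assumes "walk F P" "w \<notin> set P" "{e \<in> walk_edges P. w \<notin> e} \<subseteq> F'"
  shows "(edge_rel F')\<^sup>*\<^sup>* (hd P) (last P)"
proof -
  have "walk_edges P \<subseteq> F'" using assms(2,3) walk_edge_subset_set by fastforce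
  with walk_reaches_last[OF assms(1) hd_in_set[OF walk_nonempty[OF assms(1)]]]
  show ?thesis by (rule edge_rel_rtranclp_mono)
qed

text \<open>Removing a vertex w from two paths between a and b that meet only at their ends leaves
  every remaining vertex joined to an end other than w, and the ends joined through the path
  avoiding w.\<close>

lemma two_paths_connected_remove_vertex:
  assumes w1: "walk E P1" and w2: "walk E P2" and d1: "distinct P1" and d2: "distinct P2"
    and hd: "hd P1 = a" "hd P2 = a" and last: "last P1 = b" "last P2 = b"
    and meet: "set P1 \<inter> set P2 = {a, b}"
  shows "connected_on (set P1 \<union> set P2 - {w}) {e \<in> walk_edges P1 \<union> walk_edges P2. w \<notin> e}"
    (is "connected_on ?W ?F")
proof (rule connected_onI_root[where r = "if a = w then b else a"], intro ballI)
  fix v assume v: "v \<in> ?W"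
  obtain z where z: "z \<in> {a, b} - {w}" "(edge_rel ?F)\<^sup>*\<^sup>* v z"
  proof (cases "v \<in> set P1")
    case True
    from walk_reaches_end_avoiding[OF w1 d1 True, of w ?F] v hd(1) last(1) that show ?thesis by auto
  next
    case False
    with v have "v \<in> set P2" by blast
    from walk_reaches_end_avoiding[OF w2 d2 this, of w ?F] v hd(2) last(2) that show ?thesis by auto
  qed
  show "(edge_rel ?F)\<^sup>*\<^sup>* v (if a = w then b else a)"
  proof (cases "z = (if a = w then b else a)")
    case False
    with z(1) have zb: "z = b" and "a \<noteq> w" "b \<noteq> w" by (auto split: if_splits)
    then have "w \<notin> set P1 \<or> w \<notin> set P2" using meet by auto
    then have "(edge_rel ?F)\<^sup>*\<^sup>* a b"
      using walk_connects_ends_avoiding[OF w1, of w ?F] walk_connects_ends_avoiding[OF w2, of w ?F]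
        hd last by auto
    from rtranclp_trans[OF z(2)[unfolded zb] edge_rel_rtranclp_sym[OF this]] show ?thesis
      using \<open>a \<noteq> w\<close> by simp
  qed (use z in simp)
qed

lemma biconnected_sub_two_paths:
  assumes w1: "walk E P1" and w2: "walk E P2" and d1: "distinct P1" and d2: "distinct P2"
    and hd: "hd P1 = a" "hd P2 = a" and last: "last P1 = b" "last P2 = b"
    and meet: "set P1 \<inter> set P2 = {a, b}" and sub: "set P1 \<union> set P2 \<subseteq> V"
  shows "biconnected_sub V E (set P1 \<union> set P2) (walk_edges P1 \<union> walk_edges P2)"
proof -
  let ?W = "set P1 \<union> set P2" and ?F = "walk_edges P1 \<union> walk_edges P2"
  have "?F \<subseteq> E" using walk_edges_subset[OF w1] walk_edges_subset[OF w2] by (rule Un_least)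
  moreover have "\<forall>e\<in>?F. e \<subseteq> ?W" using walk_edge_subset_set by blast
  ultimately have "subgraph_of ?W ?F V E" unfolding subgraph_of_def using sub by blast
  moreover have "connected_on ?W ?F"
  proof (rule connected_onI_root[where r = a], intro ballI)
    fix v assume "v \<in> ?W"
    then have "(edge_rel (walk_edges P1))\<^sup>*\<^sup>* v a \<or> (edge_rel (walk_edges P2))\<^sup>*\<^sup>* v a"
      using walk_reaches_hd[OF w1, of v] walk_reaches_hd[OF w2, of v] hd by (metis UnE)
    then show "(edge_rel ?F)\<^sup>*\<^sup>* v a"
      by (elim disjE) (erule edge_rel_rtranclp_mono, blast)+
  qed
  moreover note two_paths_connected_remove_vertex[OF w1 w2 d1 d2 hd last meet]
  ultimately show ?thesis unfolding biconnected_sub_def by blast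
qed

lemma biconnected_sub_remove_vertex:
  assumes "biconnected_sub V E W F"
  shows "connected_on (W - {w}) {e\<in>F. w \<notin> e}"
proof (cases "w \<in> W")
  case False
  then have "W - {w} = W" "{e\<in>F. w \<notin> e} = F"
    using assms unfolding biconnected_sub_def subgraph_of_def by auto
  then show ?thesis using assms unfolding biconnected_sub_def by simp
qed (use assms in \<open>auto simp: biconnected_sub_def\<close>)

lemma biconnected_sub_Un:
  assumes b1: "biconnected_sub V E W1 F1" and b2: "biconnected_sub V E W2 F2"
    and xy: "x \<in> W1" "x \<in> W2" "y \<in> W1" "y \<in> W2" "x \<noteq> y"
  shows "biconnected_sub V E (W1 \<union> W2) (F1 \<union> F2)"
proof -
  have "subgraph_of (W1 \<union> W2) (F1 \<union> F2) V E"
    using b1 b2 unfolding biconnected_sub_def subgraph_of_def by auto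
  moreover have "connected_on (W1 \<union> W2 - {w}) {e \<in> F1 \<union> F2. w \<notin> e}" for w
  proof -
    obtain z where z: "z \<in> {x, y}" "z \<noteq> w" using xy(5) by auto
    have "(edge_rel {e \<in> F1 \<union> F2. w \<notin> e})\<^sup>*\<^sup>* v z" if v: "v \<in> W1 \<union> W2 - {w}" for v
    proof (cases "v \<in> W1")
      case True
      with v z xy have "(edge_rel {e \<in> F1. w \<notin> e})\<^sup>*\<^sup>* v z"
        by (intro connected_onD[OF biconnected_sub_remove_vertex[OF b1]]) auto
      then show ?thesis by (rule edge_rel_rtranclp_mono) blast
    next
      case False
      with v z xy have "(edge_rel {e \<in> F2. w \<notin> e})\<^sup>*\<^sup>* v z"
        by (intro connected_onD[OF biconnected_sub_remove_vertex[OF b2]]) auto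
      then show ?thesis by (rule edge_rel_rtranclp_mono) blast
    qed
    then show ?thesis by (rule connected_onI_root[OF ballI])
  qed
  moreover have "connected_on (W1 \<union> W2) (F1 \<union> F2)"
  proof (rule connected_onI_root[where r = x], intro ballI)
    have c: "connected_on W1 F1" "connected_on W2 F2"
      using b1 b2 unfolding biconnected_sub_def by auto
    fix v assume "v \<in> W1 \<union> W2"
    then have "(edge_rel F1)\<^sup>*\<^sup>* v x \<or> (edge_rel F2)\<^sup>*\<^sup>* v x"
      using connected_onD[OF c(1) _ xy(1)] connected_onD[OF c(2) _ xy(2)] by blast
    then show "(edge_rel (F1 \<union> F2))\<^sup>*\<^sup>* v x"
      by (blast intro: edge_rel_rtranclp_mono)
  qed
  ultimately show ?thesis unfolding biconnected_sub_def by blast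
qed

lemma biconnected_sub_UN:
  assumes "finite I" "I \<noteq> {}" "x \<noteq> y"
    and "\<And>i. i \<in> I \<Longrightarrow> biconnected_sub V E (W i) (F i) \<and> x \<in> W i \<and> y \<in> W i"
  shows "biconnected_sub V E (\<Union>i\<in>I. W i) (\<Union>i\<in>I. F i)"
  using assms(1,2,4)
proof (induction I rule: finite_ne_induct)
  case (insert i I)
  then show ?case using biconnected_sub_Un[of V E "W i" "F i", OF _ _ _ _ _ _ \<open>x \<noteq> y\<close>] by auto
qed auto

lemma simple_graph_finite: "simple_graph V E \<Longrightarrow> finite V"
  unfolding simple_graph_def by blast

lemma simple_graph_edgeE:
  assumes "simple_graph V E" "e \<in> E"
  obtains x y where "e = {x, y}" "x \<noteq> y" "x \<in> V" "y \<in> V"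
  using assms unfolding simple_graph_def by blast

lemma simple_graph_edge_subset: "simple_graph V E \<Longrightarrow> e \<in> E \<Longrightarrow> e \<subseteq> V"
  by (erule simple_graph_edgeE) auto

lemma simple_graph_finite_edges:
  assumes "simple_graph V E"
  shows "finite E"
proof -
  have "E \<subseteq> Pow V" using simple_graph_edge_subset[OF assms] by blast
  with simple_graph_finite[OF assms] show ?thesis by (meson finite_Pow_iff finite_subset)
qed

lemma card_Int_doubleton_eq_1: "p \<noteq> q \<Longrightarrow> card ({p, q} \<inter> X) = 1 \<longleftrightarrow> (p \<in> X) \<noteq> (q \<in> X)"
  by (cases "p \<in> X"; cases "q \<in> X") (auto simp: Int_insert_left)

lemma exists_bfs_parent:
  assumes "finite W" "R \<subseteq> W" and reach: "\<forall>v\<in>W. \<exists>r\<in>R. (edge_rel F)\<^sup>*\<^sup>* v r"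
    and FW: "\<forall>e\<in>F. e \<subseteq> W"
  obtains d :: "'v \<Rightarrow> nat" and p
  where "\<forall>v\<in>R. d v = 0" "\<forall>v\<in>W - R. {v, p v} \<in> F \<and> p v \<in> W \<and> d (p v) + 1 = d v"
proof -
  define d where "d v = (LEAST n. \<exists>r\<in>R. (edge_rel F ^^ n) v r)" for v
  have d_attained: "\<exists>r\<in>R. (edge_rel F ^^ d v) v r" if "v \<in> W" for v
  proof -
    from reach that obtain r where "r \<in> R" "(edge_rel F)\<^sup>*\<^sup>* v r" by blast
    then have "\<exists>n. \<exists>r\<in>R. (edge_rel F ^^ n) v r" by (blast dest: rtranclp_imp_relpowp)
    then show ?thesis unfolding d_def by (rule LeastI_ex)
  qed
  have d_le: "d v \<le> n" if "r \<in> R" "(edge_rel F ^^ n) v r" for v n r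
    unfolding d_def using that by (intro Least_le) blast
  have parent: "\<exists>u. {v, u} \<in> F \<and> u \<in> W \<and> d u + 1 = d v" if v: "v \<in> W - R" for v
  proof -
    obtain r where r: "r \<in> R" "(edge_rel F ^^ d v) v r" using d_attained v by blast
    have "d v \<noteq> 0"
    proof
      assume "d v = 0"
      with r(2) have "v = r" by simp
      with v r(1) show False by simp
    qed
    then obtain m where m: "d v = Suc m" using not0_implies_Suc by blast
    from relpowp_Suc_D2[OF r(2)[unfolded m]] obtain u
      where u: "edge_rel F v u" "(edge_rel F ^^ m) u r" by blast
    have "{v, u} \<subseteq> W" using u(1) FW by blast
    then have uW: "u \<in> W" by simp
    obtain r' where r': "r' \<in> R" "(edge_rel F ^^ d u) u r'" using d_attained uW by blast
    have "d v \<le> Suc (d u)" using d_le[OF r'(1) relpowp_Suc_I2[OF u(1) r'(2)]] .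
    with d_le[OF r(1) u(2)] m have "d u + 1 = d v" by simp
    with u(1) uW show ?thesis by auto
  qed
  have "\<forall>v\<in>R. d v = 0"
  proof
    fix v assume "v \<in> R"
    from d_le[OF this, of 0 v] show "d v = 0" by simp
  qed
  moreover have "\<forall>v\<in>W - R. \<exists>u. {v, u} \<in> F \<and> u \<in> W \<and> d u + 1 = d v"
    using parent by blast
  then obtain p where "\<forall>v\<in>W - R. {v, p v} \<in> F \<and> p v \<in> W \<and> d (p v) + 1 = d v"
    by metis
  ultimately show ?thesis by (rule that)
qed

lemma bfs_parent_edge_inj_on:
  assumes "\<forall>v\<in>W - R. d (p v) + 1 = (d v :: nat)"
  shows "inj_on (\<lambda>v. {v, p v}) (W - R)"
proof (rule inj_onI)
  fix v v' assume v: "v \<in> W - R" "v' \<in> W - R" and eq: "{v, p v} = {v', p v'}"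
  show "v = v'"
  proof (rule ccontr)
    assume "v \<noteq> v'"
    with eq have "v = p v'" "v' = p v" by (auto simp: doubleton_eq_iff)
    moreover have "d (p v') + 1 = d v'" "d (p v) + 1 = d v" using assms v by auto
    ultimately show False by simp
  qed
qed

lemma bfs_parent_edges_reach_roots:
  assumes "\<forall>v\<in>R. d v = (0::nat)" "\<forall>v\<in>W - R. p v \<in> W \<and> d (p v) + 1 = d v" "v \<in> W"
  shows "\<exists>r\<in>R. (edge_rel ((\<lambda>v. {v, p v}) ` (W - R)))\<^sup>*\<^sup>* v r"
  using assms(3)
proof (induction "d v" arbitrary: v)
  case 0
  have "v \<in> R"
  proof (rule ccontr)
    assume "v \<notin> R"
    with 0 assms(2) have "d (p v) + 1 = 0" by auto
    then show False by simp
  qed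
  then show ?case by blast
next
  case (Suc n)
  have v: "v \<in> W - R"
  proof
    show "v \<in> W" by fact
    show "v \<notin> R" using assms(1) Suc(2) by force
  qed
  with assms(2) Suc(2) have "p v \<in> W" "n = d (p v)" by force+
  from Suc(1)[OF this(2,1)] obtain r
    where "r \<in> R" "(edge_rel ((\<lambda>v. {v, p v}) ` (W - R)))\<^sup>*\<^sup>* (p v) r" by blast
  moreover have "edge_rel ((\<lambda>v. {v, p v}) ` (W - R)) v (p v)" using v by blast
  ultimately show ?case by (meson converse_rtranclp_into_rtranclp)
qed

text \<open>Each vertex outside the roots owns the edge to its parent, which leaves R.\<close>

lemma card_Diff_roots_le:
  assumes "finite W" "R \<subseteq> W" "\<forall>v\<in>W. \<exists>r\<in>R. (edge_rel F)\<^sup>*\<^sup>* v r"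
    and "\<forall>e\<in>F. e \<subseteq> W" "finite F"
  shows "card (W - R) \<le> card {e\<in>F. \<not> e \<subseteq> R}"
proof -
  obtain d :: "'a \<Rightarrow> nat" and p
    where dp: "\<forall>v\<in>R. d v = 0" "\<forall>v\<in>W - R. {v, p v} \<in> F \<and> p v \<in> W \<and> d (p v) + 1 = d v"
    by (rule exists_bfs_parent[OF assms(1-4)])
  have "card (W - R) = card ((\<lambda>v. {v, p v}) ` (W - R))"
    using dp(2) by (intro card_image[symmetric] bfs_parent_edge_inj_on[of W R d p]) simp
  also have "\<dots> \<le> card {e\<in>F. \<not> e \<subseteq> R}" using dp(2) assms(5) by (intro card_mono) auto
  finally show ?thesis .
qed

lemma card_Diff_vertices_le_card_Diff_edges:
  assumes "finite W'" "W \<subseteq> W'" "W \<noteq> {}" "F \<subseteq> F'"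
    and "\<forall>e\<in>F. e \<subseteq> W" "\<forall>e\<in>F'. e \<subseteq> W'" "connected_on W' F'"
  shows "card (W' - W) \<le> card (F' - F)"
proof -
  have "F' \<subseteq> Pow W'" using assms(6) by blast
  with assms(1) have fin: "finite F'" by (meson finite_Pow_iff finite_subset)
  obtain r where "r \<in> W" using assms(3) by blast
  then have "\<forall>v\<in>W'. \<exists>r\<in>W. (edge_rel F')\<^sup>*\<^sup>* v r"
    using connected_onD[OF assms(7)] assms(2) by blast
  with assms have "card (W' - W) \<le> card {e\<in>F'. \<not> e \<subseteq> W}"
    by (intro card_Diff_roots_le fin)
  also have "\<dots> \<le> card (F' - F)" using assms(5) fin by (intro card_mono) auto
  finally show ?thesis .
qed

lemma spanning_tree_card_le:
  assumes "finite W" "W \<noteq> {}" "spanning_tree W F T" "\<forall>e\<in>F. e \<subseteq> W"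
  shows "card T + 1 \<le> card W"
proof -
  obtain r where r: "r \<in> W" using assms(2) by auto
  have T: "T \<subseteq> F" "connected_on W T" "\<forall>e\<in>T. \<not> connected_on W (T - {e})"
    using assms(3) unfolding spanning_tree_def by auto
  have reach: "\<forall>v\<in>W. \<exists>r'\<in>{r}. (edge_rel T)\<^sup>*\<^sup>* v r'"
    using connected_onD[OF T(2) _ r] by blast
  have TW: "\<forall>e\<in>T. e \<subseteq> W" using T(1) assms(4) by blast
  from r have rW: "{r} \<subseteq> W" by simp
  obtain d :: "'a \<Rightarrow> nat" and p
    where dp: "\<forall>v\<in>{r}. d v = 0" "\<forall>v\<in>W - {r}. {v, p v} \<in> T \<and> p v \<in> W \<and> d (p v) + 1 = d v"
    by (rule exists_bfs_parent[OF assms(1) rW reach TW])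
  let ?P = "(\<lambda>v. {v, p v}) ` (W - {r})"
  have "\<forall>v\<in>W. (edge_rel ?P)\<^sup>*\<^sup>* v r"
    using bfs_parent_edges_reach_roots[OF dp(1)] dp(2) by blast
  then have P_conn: "connected_on W ?P" by (rule connected_onI_root)
  have "T \<subseteq> ?P"
  proof
    fix e assume e: "e \<in> T"
    show "e \<in> ?P"
    proof (rule ccontr)
      assume "e \<notin> ?P"
      with dp(2) have "?P \<subseteq> T - {e}" by auto
      with P_conn have "connected_on W (T - {e})" by (rule connected_on_mono)
      with T(3) e show False by blast
    qed
  qed
  then have "card T \<le> card ?P" using assms(1) by (intro card_mono) auto
  also have "\<dots> = card (W - {r})"
    using dp(2) by (intro card_image bfs_parent_edge_inj_on[of W "{r}" d p]) simp
  also have "\<dots> = card W - 1" using assms(1) r by simp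
  finally show ?thesis using assms(1,2) card_gt_0_iff[of W] by linarith
qed

text \<open>Colour vertices by the parity of their BFS depth: every parent edge crosses the colouring.\<close>

lemma exists_large_cut:
  assumes "finite W" "r \<in> W" "connected_on W F" "\<forall>e\<in>F. e \<subseteq> W" "finite F"
  obtains M where "card W - 1 \<le> card {e\<in>F. card (e \<inter> M) = 1}"
proof -
  have reach: "\<forall>v\<in>W. \<exists>r'\<in>{r}. (edge_rel F)\<^sup>*\<^sup>* v r'"
    using connected_onD[OF assms(3) _ assms(2)] by blast
  from assms(2) have rW: "{r} \<subseteq> W" by simp
  obtain d :: "'a \<Rightarrow> nat" and p
    where dp: "\<forall>v\<in>{r}. d v = 0" "\<forall>v\<in>W - {r}. {v, p v} \<in> F \<and> p v \<in> W \<and> d (p v) + 1 = d v"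
    by (rule exists_bfs_parent[OF assms(1) rW reach assms(4)])
  define M where "M = {v. even (d v)}"
  have "(\<lambda>v. {v, p v}) ` (W - {r}) \<subseteq> {e\<in>F. card (e \<inter> M) = 1}"
  proof
    fix e assume "e \<in> (\<lambda>v. {v, p v}) ` (W - {r})"
    then obtain v where v: "v \<in> W - {r}" "e = {v, p v}" by blast
    with dp(2) have pv: "{v, p v} \<in> F" "d (p v) + 1 = d v" by auto
    then have "v \<noteq> p v" by auto
    moreover from pv(2) have "(v \<in> M) \<noteq> (p v \<in> M)"
      unfolding M_def by (metis even_Suc Suc_eq_plus1 mem_Collect_eq)
    ultimately show "e \<in> {e\<in>F. card (e \<inter> M) = 1}"
      using pv(1) v(2) card_Int_doubleton_eq_1[of v "p v" M] by simp
  qed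
  then have "card ((\<lambda>v. {v, p v}) ` (W - {r})) \<le> card {e\<in>F. card (e \<inter> M) = 1}"
    using assms(5) by (intro card_mono) auto
  then have "card (W - {r}) \<le> card {e\<in>F. card (e \<inter> M) = 1}"
    using card_image[OF bfs_parent_edge_inj_on[of W "{r}" d p]] dp(2) by simp
  with assms(1,2) show ?thesis by (intro that) simp
qed

section \<open>Bonds of almost trees\<close>

lemma biconnected_sub_le_component:
  assumes "simple_graph V E" "biconnected_sub V E W F"
  obtains Wc Fc where "biconnected_component V E Wc Fc" "W \<subseteq> Wc" "F \<subseteq> Fc"
proof -
  have finV: "finite V" and finE: "finite E"
    using assms(1) by (simp_all add: simple_graph_finite simple_graph_finite_edges)
  have sub: "W' \<subseteq> V" "F' \<subseteq> E" if "biconnected_sub V E W' F'" for W' F'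
    using that unfolding biconnected_sub_def subgraph_of_def by auto
  define P where "P = (\<lambda>(W', F'). biconnected_sub V E W' F' \<and> W \<subseteq> W' \<and> F \<subseteq> F')"
  define size :: "'a set \<times> 'a set set \<Rightarrow> nat" where "size = (\<lambda>(W', F'). card W' + card F')"
  have bounded: "\<forall>y. P y \<longrightarrow> size y < card V + card E + 1"
  proof (intro allI impI)
    fix y assume "P y"
    obtain W' F' where y: "y = (W', F')" by (cases y)
    with \<open>P y\<close> have "biconnected_sub V E W' F'" unfolding P_def by simp
    then have "card W' \<le> card V" "card F' \<le> card E"
      using sub finV finE by (simp_all add: card_mono)
    then show "size y < card V + card E + 1" unfolding y size_def by simp
  qed
  have "P (W, F)" unfolding P_def using assms(2) by simp
  define m where "m = arg_max size P"
  have m: "P m" "\<forall>y. P y \<longrightarrow> size y \<le> size m"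
    using arg_max_nat_lemma[OF \<open>P (W, F)\<close> bounded] unfolding m_def by auto
  obtain Wc Fc where mc: "m = (Wc, Fc)" by (cases m)
  have Pc: "biconnected_sub V E Wc Fc" "W \<subseteq> Wc" "F \<subseteq> Fc" using m(1) unfolding mc P_def by auto
  have "biconnected_component V E Wc Fc"
    unfolding biconnected_component_def
  proof (rule conjI[OF Pc(1)], intro allI impI)
    fix W' F' assume bigger: "biconnected_sub V E W' F' \<and> Wc \<subseteq> W' \<and> Fc \<subseteq> F'"
    then have "P (W', F')" using Pc unfolding P_def by auto
    with m(2) have le: "card W' + card F' \<le> card Wc + card Fc" unfolding mc size_def by fastforce
    have fin: "finite W'" "finite F'"
      using sub[of W' F'] bigger finV finE by (auto intro: finite_subset)
    have "card Wc \<le> card W'" "card Fc \<le> card F'" using bigger fin by (auto intro: card_mono)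
    with le have "card Wc = card W'" "card Fc = card F'" by linarith+
    with bigger fin show "W' = Wc \<and> F' = Fc" by (metis card_subset_eq)
  qed
  then show ?thesis using Pc(2,3) by (rule that)
qed

lemma almost_tree_biconnected_sub_card:
  assumes "almost_tree k V E" "biconnected_sub V E W F" "W \<noteq> {}"
  shows "card F + 1 \<le> card W + k"
proof -
  have sg: "simple_graph V E" using assms(1) unfolding almost_tree_def connected_graph_def by blast
  obtain Wc Fc where c: "biconnected_component V E Wc Fc" "W \<subseteq> Wc" "F \<subseteq> Fc"
    using biconnected_sub_le_component[OF sg assms(2)] by blast
  obtain T where T: "spanning_tree Wc Fc T" "card (Fc - T) \<le> k"
    using assms(1) c(1) unfolding almost_tree_def by blast
  have bc: "Wc \<subseteq> V" "Fc \<subseteq> E" "\<forall>e\<in>Fc. e \<subseteq> Wc" "connected_on Wc Fc"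
    using c(1) unfolding biconnected_component_def biconnected_sub_def subgraph_of_def by auto
  have FW: "\<forall>e\<in>F. e \<subseteq> W"
    using assms(2) unfolding biconnected_sub_def subgraph_of_def by blast
  have fin: "finite Wc" "finite Fc"
    using bc(1,2) simple_graph_finite[OF sg] simple_graph_finite_edges[OF sg]
    by (auto intro: finite_subset)
  have TF: "T \<subseteq> Fc" using T(1) unfolding spanning_tree_def by blast
  have "card T + 1 \<le> card Wc"
    using spanning_tree_card_le[OF fin(1) _ T(1) bc(3)] c(2) assms(3) by blast
  moreover have "card (Wc - W) \<le> card (Fc - F)"
    using card_Diff_vertices_le_card_Diff_edges[OF fin(1) c(2) assms(3) c(3) FW bc(3,4)] .
  moreover have "card (Fc - F) = card Fc - card F" "card (Wc - W) = card Wc - card W"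
    "card (Fc - T) = card Fc - card T"
    using fin c(2,3) TF by (simp_all add: card_Diff_subset finite_subset)
  moreover have "card F \<le> card Fc" "card W \<le> card Wc" "card T \<le> card Fc"
    using fin c(2,3) TF by (simp_all add: card_mono)
  ultimately show ?thesis using T(2) by linarith
qed

lemma simple_graph_edge_not_cut:
  assumes "simple_graph V E" "e \<in> E" "e \<subseteq> U \<or> e \<inter> U = {}"
  shows "e \<notin> cut_edges E U"
proof -
  obtain x y where "e = {x, y}" "x \<noteq> y" "x \<in> V" "y \<in> V"
    by (rule simple_graph_edgeE[OF assms(1,2)])
  with assms(3) show ?thesis by (auto simp: card_Int_doubleton_eq_1)
qed

lemma walk_shore_edges_not_cut:
  assumes "simple_graph V E" "walk (induced_edges E X) p" "X = U \<or> X = V - U"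
  shows "walk_edges p \<inter> cut_edges E U = {}"
proof -
  have "f \<notin> cut_edges E U" if "f \<in> walk_edges p" for f
  proof (rule simple_graph_edge_not_cut[OF assms(1)])
    from that walk_edges_subset[OF assms(2)] have "f \<in> E" "f \<subseteq> X" by auto
    with assms(3) show "f \<in> E" "f \<subseteq> U \<or> f \<inter> U = {}" by auto
  qed
  then show ?thesis by blast
qed

lemma exists_cycle_through_cut_edges:
  assumes sg: "simple_graph V E" and UV: "U \<subseteq> V"
    and cU: "connected_on U (induced_edges E U)" and cV: "connected_on (V - U) (induced_edges E (V - U))"
    and e1: "{a1, b1} \<in> E" "a1 \<in> U" "b1 \<in> V - U"
    and e: "{a, b} \<in> E" "a \<in> U" "b \<in> V - U"
  obtains W F where "biconnected_sub V E W F" "a1 \<in> W" "b1 \<in> W" "{a, b} \<in> F"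
    "\<forall>v\<in>W. (edge_rel (F - cut_edges E U))\<^sup>*\<^sup>* v a1 \<or> (edge_rel (F - cut_edges E U))\<^sup>*\<^sup>* v b1"
proof -
  obtain pU where pU: "walk (induced_edges E U) pU" "distinct pU" "hd pU = a1" "last pU = a"
    using rtranclp_edge_rel_imp_walk[OF connected_onD[OF cU e1(2) e(2)]] by blast
  obtain pV where pV: "walk (induced_edges E (V - U)) pV" "distinct pV" "hd pV = b" "last pV = b1"
    using rtranclp_edge_rel_imp_walk[OF connected_onD[OF cV e(3) e1(3)]] by blast
  have ne: "pU \<noteq> []" "pV \<noteq> []" using pU(1) pV(1) by auto
  have sU: "set pU \<subseteq> U" using walk_set_subset[OF pU(1)] pU(3) e1(2) by auto
  have sV: "set pV \<subseteq> V - U" using walk_set_subset[OF pV(1)] pV(3) e(3) by auto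
  have wU: "walk E pU" using pU(1) by (rule walk_mono) auto
  have wV: "walk E pV" using pV(1) by (rule walk_mono) auto
  define P where "P = pU @ pV"
  have wP: "walk E P" unfolding P_def using walk_append[OF ne] wU wV pU(4) pV(3) e(1) by simp
  have w1: "walk E [a1, b1]" using e1(1) by simp
  have dP: "distinct P" unfolding P_def using pU(2) pV(2) sU sV by auto
  have d1: "distinct [a1, b1]" using e1 by auto
  have ends: "hd P = a1" "last P = b1" unfolding P_def using pU(3) pV(4) ne by simp_all
  have "a1 \<in> set pU" "b1 \<in> set pV"
    using pU(3) pV(4) hd_in_set[OF ne(1)] last_in_set[OF ne(2)] by auto
  then have meet: "set [a1, b1] \<inter> set P = {a1, b1}" unfolding P_def by auto
  have sub: "set [a1, b1] \<union> set P \<subseteq> V" unfolding P_def using sU sV e1 UV by auto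
  have bc: "biconnected_sub V E (set [a1, b1] \<union> set P) (walk_edges [a1, b1] \<union> walk_edges P)"
    using biconnected_sub_two_paths[OF w1 wP d1 dP _ ends(1) _ ends(2) meet sub] by simp
  define F where "F = walk_edges [a1, b1] \<union> walk_edges P"
  have edges: "walk_edges P = walk_edges pU \<union> walk_edges pV \<union> {{a, b}}"
    unfolding P_def using walk_edges_append[OF ne] pU(4) pV(3) by simp
  have U_edges: "walk_edges pU \<subseteq> F - cut_edges E U"
    using walk_shore_edges_not_cut[OF sg pU(1)] edges unfolding F_def by blast
  have V_edges: "walk_edges pV \<subseteq> F - cut_edges E U"
    using walk_shore_edges_not_cut[OF sg pV(1)] edges unfolding F_def by blast
  show ?thesis
  proof (rule that)
    show "biconnected_sub V E (set [a1, b1] \<union> set P) F" using bc unfolding F_def .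
    show "a1 \<in> set [a1, b1] \<union> set P" "b1 \<in> set [a1, b1] \<union> set P" by simp_all
    show "{a, b} \<in> F" unfolding F_def edges by simp
    show "\<forall>v\<in>set [a1, b1] \<union> set P. (edge_rel (F - cut_edges E U))\<^sup>*\<^sup>* v a1 \<or>
        (edge_rel (F - cut_edges E U))\<^sup>*\<^sup>* v b1"
    proof
      fix v assume "v \<in> set [a1, b1] \<union> set P"
      then consider "v \<in> {a1, b1}" | "v \<in> set pU" | "v \<in> set pV" unfolding P_def by auto
      then show "(edge_rel (F - cut_edges E U))\<^sup>*\<^sup>* v a1 \<or> (edge_rel (F - cut_edges E U))\<^sup>*\<^sup>* v b1"
      proof cases
        case 2
        from walk_reaches_hd[OF pU(1) this] pU(3)
        have "(edge_rel (walk_edges pU))\<^sup>*\<^sup>* v a1" by simp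
        from edge_rel_rtranclp_mono[OF this U_edges] show ?thesis ..
      next
        case 3
        from walk_reaches_last[OF pV(1) this] pV(4)
        have "(edge_rel (walk_edges pV))\<^sup>*\<^sup>* v b1" by simp
        from edge_rel_rtranclp_mono[OF this V_edges] show ?thesis ..
      qed auto
    qed
  qed
qed

lemma cut_edgeE:
  assumes "simple_graph V E" "e \<in> cut_edges E U"
  obtains a b where "e = {a, b}" "a \<in> U" "b \<in> V - U"
proof -
  from assms(2) have "e \<in> E" by simp
  then obtain x y where xy: "e = {x, y}" "x \<noteq> y" "x \<in> V" "y \<in> V"
    by (rule simple_graph_edgeE[OF assms(1)])
  with assms(2) have "(x \<in> U) \<noteq> (y \<in> U)" using card_Int_doubleton_eq_1[of x y U] by simp
  with xy show ?thesis by (metis Diff_iff insert_commute that)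
qed

text \<open>Glue the cycles through a fixed bond edge and each other bond edge.\<close>

lemma exists_biconnected_sub_containing_bond:
  assumes sg: "simple_graph V E" and UV: "U \<subseteq> V"
    and cU: "connected_on U (induced_edges E U)" and cV: "connected_on (V - U) (induced_edges E (V - U))"
    and e1: "{a1, b1} \<in> cut_edges E U" "a1 \<in> U" "b1 \<in> V - U"
  obtains W F where "biconnected_sub V E W F" "{a1, b1} \<subseteq> W" "cut_edges E U \<subseteq> F"
    "\<forall>v\<in>W. \<exists>r\<in>{a1, b1}. (edge_rel (F - cut_edges E U))\<^sup>*\<^sup>* v r"
proof -
  let ?B = "cut_edges E U"
  define good where "good e W F \<longleftrightarrow> biconnected_sub V E W F \<and> a1 \<in> W \<and> b1 \<in> W \<and> e \<in> F \<and>
    (\<forall>v\<in>W. (edge_rel (F - ?B))\<^sup>*\<^sup>* v a1 \<or> (edge_rel (F - ?B))\<^sup>*\<^sup>* v b1)" for e W F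
  have "\<exists>WF. good e (fst WF) (snd WF)" if e: "e \<in> ?B" for e
  proof -
    obtain a b where ab: "e = {a, b}" "a \<in> U" "b \<in> V - U" by (rule cut_edgeE[OF sg e])
    have "{a1, b1} \<in> E" "{a, b} \<in> E" using e e1 ab by auto
    then obtain W F where "good e W F"
      unfolding good_def ab(1)
      by (rule exists_cycle_through_cut_edges[OF sg UV cU cV _ e1(2,3) _ ab(2,3)]) blast
    then show ?thesis by (metis fst_conv snd_conv)
  qed
  then obtain g where g: "\<forall>e\<in>?B. good e (fst (g e)) (snd (g e))" by metis
  define W where "W = (\<Union>e\<in>?B. fst (g e))"
  define F where "F = (\<Union>e\<in>?B. snd (g e))"
  have "a1 \<noteq> b1" "finite ?B" "?B \<noteq> {}"
    using e1 simple_graph_finite_edges[OF sg] by auto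
  then have "biconnected_sub V E W F"
    unfolding W_def F_def using g by (intro biconnected_sub_UN) (auto simp: good_def)
  moreover have "{a1, b1} \<subseteq> W" using g e1 unfolding W_def good_def by blast
  moreover have "?B \<subseteq> F" using g unfolding F_def good_def by blast
  moreover have "\<forall>v\<in>W. \<exists>r\<in>{a1, b1}. (edge_rel (F - ?B))\<^sup>*\<^sup>* v r"
  proof
    fix v assume "v \<in> W"
    then obtain e where e: "e \<in> ?B" "v \<in> fst (g e)" unfolding W_def by blast
    have sub: "snd (g e) - ?B \<subseteq> F - ?B" using e(1) unfolding F_def by blast
    from g e have "\<exists>r\<in>{a1, b1}. (edge_rel (snd (g e) - ?B))\<^sup>*\<^sup>* v r"
      unfolding good_def by blast
    then obtain r where "r \<in> {a1, b1}" "(edge_rel (snd (g e) - ?B))\<^sup>*\<^sup>* v r" ..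
    with edge_rel_rtranclp_mono[OF _ sub] show "\<exists>r\<in>{a1, b1}. (edge_rel (F - ?B))\<^sup>*\<^sup>* v r"
      by blast
  qed
  ultimately show ?thesis by (rule that)
qed

text \<open>The glued subgraph has at least as many edges outside the bond as vertices besides the
  ends of the fixed bond edge, so its cyclomatic bound limits the size of the bond.\<close>

lemma card_cut_edges_le:
  assumes at: "almost_tree k V E" and UV: "U \<subseteq> V"
    and cU: "connected_on U (induced_edges E U)" and cV: "connected_on (V - U) (induced_edges E (V - U))"
  shows "card (cut_edges E U) \<le> k + 1"
proof (cases "cut_edges E U = {}")
  case False
  let ?B = "cut_edges E U"
  have sg: "simple_graph V E" using at unfolding almost_tree_def connected_graph_def by blast
  from False obtain e1 where e1: "e1 \<in> ?B" by blast
  obtain a1 b1 where ab1: "e1 = {a1, b1}" "a1 \<in> U" "b1 \<in> V - U" by (rule cut_edgeE[OF sg e1])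
  obtain W F where bc: "biconnected_sub V E W F" and ends: "{a1, b1} \<subseteq> W"
    and BF: "?B \<subseteq> F" and reach: "\<forall>v\<in>W. \<exists>r\<in>{a1, b1}. (edge_rel (F - ?B))\<^sup>*\<^sup>* v r"
    using e1 unfolding ab1(1)
    by (rule exists_biconnected_sub_containing_bond[OF sg UV cU cV _ ab1(2,3)])
  have ne: "a1 \<noteq> b1" using ab1 by auto
  have finB: "finite ?B" using simple_graph_finite_edges[OF sg] by simp
  have WV: "W \<subseteq> V" and FE: "F \<subseteq> E" and FW: "\<forall>e\<in>F. e \<subseteq> W"
    using bc unfolding biconnected_sub_def subgraph_of_def by auto
  have finW: "finite W" and finF: "finite F"
    using WV FE simple_graph_finite[OF sg] simple_graph_finite_edges[OF sg] by (auto intro: finite_subset)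
  from reach finW ends FW finF have "card (W - {a1, b1}) \<le> card {e\<in>F - ?B. \<not> e \<subseteq> {a1, b1}}"
    by (intro card_Diff_roots_le) auto
  also have "\<dots> \<le> card (F - ?B)" using finF by (intro card_mono) auto
  finally have "card W - 2 \<le> card F - card ?B"
    using ends ne finW BF finB by (simp add: card_Diff_subset)
  moreover have "card F + 1 \<le> card W + k"
    using almost_tree_biconnected_sub_card[OF at bc] ends by blast
  moreover have "card ?B \<le> card F" "2 \<le> card W"
    using card_mono[OF finF BF] card_mono[OF finW ends] ne by auto
  ultimately show ?thesis by linarith
qed (metis card.empty zero_le)

section \<open>Faces of 0/1-polytopes\<close>

lemma zero_one_convex_combination_eq:
  fixes a b x u :: real
  assumes "x = 0 \<or> x = 1" "0 \<le> a" "a \<le> 1" "0 \<le> b" "b \<le> 1" "0 < u" "u < 1"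
    and "x = (1 - u) * a + u * b"
  shows "a = b"
  using assms(1)
proof
  assume "x = 0"
  have "(1 - u) * a \<ge> 0" "u * b \<ge> 0" using assms by auto
  with \<open>x = 0\<close> assms(8) have "(1 - u) * a = 0" "u * b = 0" by linarith+
  with assms show ?thesis by auto
next
  assume "x = 1"
  have "(1 - u) * (1 - a) \<ge> 0" "u * (1 - b) \<ge> 0" using assms by auto
  moreover have "(1 - u) * (1 - a) + u * (1 - b) = 0"
    using assms(8) \<open>x = 1\<close> by (simp add: algebra_simps)
  ultimately have "(1 - u) * (1 - a) = 0" "u * (1 - b) = 0" by linarith+
  with assms show ?thesis by auto
qed

lemma extreme_point_of_convex_hull_zero_one:
  fixes C :: "(real ^ 'n) set"
  assumes "C \<subseteq> cbox 0 1" "x \<in> C" "\<forall>i. x $ i = 0 \<or> x $ i = 1"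
  shows "x extreme_point_of (convex hull C)"
proof -
  have box: "convex hull C \<subseteq> cbox 0 1" using hull_minimal[of C "cbox 0 1" convex] assms(1) by simp
  show ?thesis unfolding extreme_point_of_def
  proof (intro conjI ballI)
    show "x \<in> convex hull C" using assms(2) by (rule hull_inc)
    fix a b assume ab: "a \<in> convex hull C" "b \<in> convex hull C"
    show "x \<notin> open_segment a b"
    proof
      assume "x \<in> open_segment a b"
      then obtain u where u: "a \<noteq> b" "0 < u" "u < 1" "x = (1 - u) *\<^sub>R a + u *\<^sub>R b"
        unfolding in_segment by blast
      have "a $ i = b $ i" for i
      proof (rule zero_one_convex_combination_eq)
        show "x $ i = 0 \<or> x $ i = 1" using assms(3) by blast
        show "0 \<le> a $ i" "a $ i \<le> 1" "0 \<le> b $ i" "b $ i \<le> 1"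
          using ab box by (auto simp: mem_box_cart)
        show "0 < u" "u < 1" by (fact u(2), fact u(3))
        show "x $ i = (1 - u) * a $ i + u * b $ i" using u(4) by simp
      qed
      with u(1) show False by (simp add: vec_eq_iff)
    qed
  qed
qed

lemma face_of_convex_hull_fix_coordinates:
  fixes C :: "(real ^ 'n) set" and x :: "real ^ 'n"
  assumes "C \<subseteq> cbox 0 1" "\<forall>i. x $ i = 0 \<or> x $ i = 1"
  shows "(convex hull C \<inter> {z. \<forall>i\<in>I. z $ i = x $ i}) face_of (convex hull C)"
proof -
  let ?P = "convex hull C"
  have box: "\<forall>z\<in>?P. \<forall>i. 0 \<le> z $ i \<and> z $ i \<le> 1"
    using hull_minimal[of C "cbox 0 1" convex] assms(1) by (auto simp: mem_box_cart)
  have facet: "(?P \<inter> {z. z $ i = x $ i}) face_of ?P" for i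
  proof (cases "x $ i = 1")
    case True
    have "(?P \<inter> {z. axis i 1 \<bullet> z = 1}) face_of ?P"
      using box by (intro face_of_Int_supporting_hyperplane_le) (auto simp: inner_axis')
    with True show ?thesis by (simp add: inner_axis')
  next
    case False
    with assms(2) have "x $ i = 0" by blast
    moreover have "(?P \<inter> {z. axis i 1 \<bullet> z = 0}) face_of ?P"
      using box by (intro face_of_Int_supporting_hyperplane_ge) (auto simp: inner_axis')
    ultimately show ?thesis by (simp add: inner_axis')
  qed
  show ?thesis
  proof (cases "I = {}")
    case True
    then show ?thesis by (simp add: face_of_refl)
  next
    case False
    then have eq: "?P \<inter> {z. \<forall>i\<in>I. z $ i = x $ i} = \<Inter> ((\<lambda>i. ?P \<inter> {z. z $ i = x $ i}) ` I)"
      by auto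
    show ?thesis unfolding eq by (rule face_of_Inter) (use False facet in auto)
  qed
qed

lemma skel_adj_if_face_meets_in_two:
  assumes "finite C" "F face_of convex hull C" "x \<in> C \<inter> F" "y \<in> C \<inter> F" "x \<noteq> y"
    and "C \<inter> F \<subseteq> {x, y}"
  shows "skel_adj (convex hull C) x y"
proof -
  obtain C' where C': "C' \<subseteq> C" "F = convex hull C'"
    using face_of_convex_hull_subset[OF finite_imp_compact[OF assms(1)] assms(2)] by blast
  have "C' \<subseteq> {x, y}" using C' hull_inc[of _ C'] assms(6) by blast
  then have "F \<subseteq> convex hull {x, y}" using C'(2) by (simp add: hull_mono)
  moreover have "convex hull {x, y} \<subseteq> F"
    using assms(3,4) face_of_imp_convex[OF assms(2)] by (intro hull_minimal) auto
  ultimately have F: "F = closed_segment x y" by (simp add: segment_convex_hull)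
  have "aff_dim F = 1" using F assms(5) by (simp add: segment_convex_hull aff_dim_convex_hull)
  moreover have "x extreme_point_of F" "y extreme_point_of F"
    unfolding F extreme_point_of_segment by auto
  ultimately show ?thesis unfolding skel_adj_def using assms(2,5) by blast
qed

text \<open>The edge contains the midpoint of a and b, hence a (being a face); and an extreme point
  lying on a segment is one of its ends.\<close>

lemma skel_adj_sum_eq_vertex:
  assumes "skel_adj P x y" "a extreme_point_of P" "b \<in> P" "x + y = a + b"
  shows "a = x \<or> a = y"
proof (rule ccontr)
  assume "\<not> (a = x \<or> a = y)"
  then have ax: "a \<noteq> x" and ay: "a \<noteq> y" by auto
  obtain F where F: "F face_of P" "aff_dim F = 1" "x extreme_point_of F" "y extreme_point_of F"
    and xy: "x \<noteq> y"
    using assms(1) unfolding skel_adj_def by blast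
  have xF: "x \<in> F" and yF: "y \<in> F" using F(3,4) unfolding extreme_point_of_def by auto
  have aP: "a \<in> P" using assms(2) unfolding extreme_point_of_def by auto
  have mid: "midpoint x y = midpoint a b" unfolding midpoint_def using assms(4) by simp
  have "midpoint x y \<in> F"
    using face_of_imp_convex[OF F(1)] xF yF midpoint_in_closed_segment[of x y]
    unfolding convex_contains_segment by blast
  show False
  proof (cases "a = b")
    case True
    with mid have "midpoint x y = a" by simp
    moreover have "midpoint x y \<in> open_segment x y" using xy by simp
    ultimately have "a \<in> open_segment x y" by simp
    with assms(2) xF yF face_of_imp_subset[OF F(1)] show False
      unfolding extreme_point_of_def by blast
  next
    case False
    then have "midpoint a b \<in> open_segment a b" by simp
    with face_ofD[OF F(1) _ aP assms(3)] \<open>midpoint x y \<in> F\<close> mid have aF: "a \<in> F" by metis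
    have "collinear F" using F(2) by (simp add: collinear_aff_dim)
    moreover have "{x, y, a} \<subseteq> F" using xF yF aF by simp
    ultimately have "collinear {x, y, a}" by (rule collinear_subset)
    then have "between (y, a) x \<or> between (a, x) y \<or> between (x, y) a"
      by (simp add: collinear_between_cases)
    then show False
    proof (elim disjE)
      assume "between (y, a) x"
      then have "x \<in> open_segment y a" using xy ax by (simp add: between_mem_segment open_segment_def)
      with F(3) yF aF show False unfolding extreme_point_of_def by blast
    next
      assume "between (a, x) y"
      then have "y \<in> open_segment a x" using xy ay by (simp add: between_mem_segment open_segment_def)
      with F(4) xF aF show False unfolding extreme_point_of_def by blast
    next
      assume "between (x, y) a"
      then have "a \<in> open_segment x y" using ax ay by (simp add: between_mem_segment open_segment_def)
      with extreme_point_of_face[OF F(1)] assms(2) aF xF yF show False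
        unfolding extreme_point_of_def by blast
    qed
  qed
qed

lemma cut_vec_nth: "cut_vec E X $ e = (if e \<in> E \<and> card (e \<inter> X) = 1 then 1 else 0)"
  by (simp add: cut_vec_def)

lemma cut_vec_edge:
  "e \<in> E \<Longrightarrow> e = {p, q} \<Longrightarrow> p \<noteq> q \<Longrightarrow> cut_vec E X $ e = (if (p \<in> X) \<noteq> (q \<in> X) then 1 else 0)"
  using card_Int_doubleton_eq_1[of p q X] by (simp add: cut_vec_nth)

lemma cut_vec_in_cbox: "cut_vec E X \<in> cbox 0 1"
  by (simp add: mem_box_cart cut_vec_nth)

lemma cut_vec_zero_one: "cut_vec E X $ i = 0 \<or> cut_vec E X $ i = 1"
  by (simp add: cut_vec_nth)

lemma cut_vec_eq_iff_edges:
  assumes "simple_graph V E"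
  shows "cut_vec E A = cut_vec E B \<longleftrightarrow>
    (\<forall>p q. {p, q} \<in> E \<longrightarrow> ((p \<in> A) \<noteq> (q \<in> A)) = ((p \<in> B) \<noteq> (q \<in> B)))"
proof
  assume eq: "cut_vec E A = cut_vec E B"
  show "\<forall>p q. {p, q} \<in> E \<longrightarrow> ((p \<in> A) \<noteq> (q \<in> A)) = ((p \<in> B) \<noteq> (q \<in> B))"
  proof (intro allI impI)
    fix p q assume pq: "{p, q} \<in> E"
    then have "p \<noteq> q" using assms by (auto elim: simple_graph_edgeE simp: doubleton_eq_iff)
    with pq eq cut_vec_edge[OF pq refl, of A] cut_vec_edge[OF pq refl, of B]
    show "((p \<in> A) \<noteq> (q \<in> A)) = ((p \<in> B) \<noteq> (q \<in> B))" by (auto split: if_splits)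
  qed
next
  assume edges: "\<forall>p q. {p, q} \<in> E \<longrightarrow> ((p \<in> A) \<noteq> (q \<in> A)) = ((p \<in> B) \<noteq> (q \<in> B))"
  have "cut_vec E A $ e = cut_vec E B $ e" for e
  proof (cases "e \<in> E")
    case True
    then obtain p q where "e = {p, q}" "p \<noteq> q" "p \<in> V" "q \<in> V"
      by (rule simple_graph_edgeE[OF assms])
    with True edges show ?thesis by (simp add: cut_vec_edge)
  qed (simp add: cut_vec_nth)
  then show "cut_vec E A = cut_vec E B" by (simp add: vec_eq_iff)
qed

lemma cut_vec_cong: "simple_graph V E \<Longrightarrow> A \<inter> V = B \<inter> V \<Longrightarrow> cut_vec E A = cut_vec E B"
  by (subst cut_vec_eq_iff_edges) (auto dest: simple_graph_edge_subset)

lemma cut_vec_Diff: "simple_graph V E \<Longrightarrow> cut_vec E (V - A) = cut_vec E A"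
  by (subst cut_vec_eq_iff_edges) (auto dest: simple_graph_edge_subset)

lemma skel_vertices_cut_polytope: "skel_vertices (cut_polytope V E) = {cut_vec E S | S. S \<subseteq> V}"
proof
  show "skel_vertices (cut_polytope V E) \<subseteq> {cut_vec E S | S. S \<subseteq> V}"
    unfolding skel_vertices_def cut_polytope_def using extreme_point_of_convex_hull by blast
  show "{cut_vec E S | S. S \<subseteq> V} \<subseteq> skel_vertices (cut_polytope V E)"
    unfolding skel_vertices_def cut_polytope_def
    using extreme_point_of_convex_hull_zero_one[of "{cut_vec E S | S. S \<subseteq> V}"]
      cut_vec_in_cbox cut_vec_zero_one by blast
qed

lemma skel_adj_cut_polytope_imp_cut_vec:
  assumes "skel_adj (cut_polytope V E) x y"
  shows "x \<in> {cut_vec E S | S. S \<subseteq> V}" "y \<in> {cut_vec E S | S. S \<subseteq> V}"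
  using assms extreme_point_of_face[of _ "cut_polytope V E"]
  unfolding skel_adj_def skel_vertices_cut_polytope[symmetric] skel_vertices_def by blast+

section \<open>Adjacency of cut vectors\<close>

lemma cut_vec_sym_diff_nth_eq_iff:
  assumes "simple_graph V E" "e \<in> E"
  shows "cut_vec E (sym_diff S D) $ e = cut_vec E S $ e \<longleftrightarrow> e \<notin> cut_edges E D"
proof -
  obtain p q where pq: "e = {p, q}" "p \<noteq> q" "p \<in> V" "q \<in> V"
    by (rule simple_graph_edgeE[OF assms])
  show ?thesis
    using assms(2) pq card_Int_doubleton_eq_1[OF pq(2), of D]
    by (auto simp: cut_vec_edge)
qed

text \<open>Within the face cut out by the coordinates off the bond of D, only the two cuts S and
  S \<triangle> D remain: off the bond, A \<triangle> S is constant along the connected shores D and V - D.\<close>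

lemma cut_vec_agreeing_off_bond:
  assumes sg: "simple_graph V E" and DV: "D \<subseteq> V"
    and cD: "connected_on D (induced_edges E D)" and cVD: "connected_on (V - D) (induced_edges E (V - D))"
    and agree: "\<forall>e\<in>E - cut_edges E D. cut_vec E A $ e = cut_vec E S $ e"
  shows "cut_vec E A = cut_vec E S \<or> cut_vec E A = cut_vec E (sym_diff S D)"
proof -
  define t where "t p \<longleftrightarrow> (p \<in> A) \<noteq> (p \<in> S)" for p
  have edge: "t p = t q" if "{p, q} \<in> E" "{p, q} \<notin> cut_edges E D" for p q
  proof -
    have "p \<noteq> q" using that(1) sg by (auto elim: simple_graph_edgeE simp: doubleton_eq_iff)
    with that agree cut_vec_edge[OF that(1) refl, of A] cut_vec_edge[OF that(1) refl, of S]
    show ?thesis unfolding t_def by (auto split: if_splits)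
  qed
  have const: "t p = t q" if "p \<in> X" "q \<in> X" "X = D \<or> X = V - D" for X p q
  proof (rule connected_on_const[of X E])
    show "connected_on X (induced_edges E X)" using that(3) cD cVD by blast
    fix a b assume "{a, b} \<in> E" "{a, b} \<subseteq> X"
    with that(3) simple_graph_edge_not_cut[OF sg] show "t a = t b" by (intro edge) blast+
  qed (use that in auto)
  obtain c1 where c1: "\<forall>p\<in>D. t p = c1" using const[of _ D] by blast
  obtain c2 where c2: "\<forall>p\<in>V - D. t p = c2" using const[of _ "V - D"] by blast
  define X where "X = (if c1 then D else {}) \<union> (if c2 then V - D else {})"
  have "A \<inter> V = sym_diff S X \<inter> V"
    using c1 c2 DV unfolding X_def t_def by auto
  then have A: "cut_vec E A = cut_vec E (sym_diff S X)" by (rule cut_vec_cong[OF sg])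
  show ?thesis
  proof (cases c1; cases c2)
    assume "c1" "c2"
    then have "sym_diff S X \<inter> V = (V - S) \<inter> V" unfolding X_def using DV by auto
    with A show ?thesis using cut_vec_cong[OF sg] cut_vec_Diff[OF sg] by metis
  next
    assume "\<not> c1" "c2"
    then have "sym_diff S X \<inter> V = (V - sym_diff S D) \<inter> V" unfolding X_def using DV by auto
    with A show ?thesis using cut_vec_cong[OF sg] cut_vec_Diff[OF sg] by metis
  qed (use A in \<open>auto simp: X_def\<close>)
qed

lemma skel_adj_cut_vec_sym_diff:
  fixes V :: "'v::finite set"
  assumes sg: "simple_graph V E" and SV: "S \<subseteq> V" and DV: "D \<subseteq> V"
    and cD: "connected_on D (induced_edges E D)" and cVD: "connected_on (V - D) (induced_edges E (V - D))"
    and ne: "cut_vec E S \<noteq> cut_vec E (sym_diff S D)"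
  shows "skel_adj (cut_polytope V E) (cut_vec E S) (cut_vec E (sym_diff S D))"
proof -
  let ?C = "{cut_vec E S | S. S \<subseteq> V}"
  define F where "F = convex hull ?C \<inter> {z. \<forall>i\<in>E - cut_edges E D. z $ i = cut_vec E S $ i}"
  have "finite ?C" using simple_graph_finite[OF sg] by simp
  moreover have "F face_of convex hull ?C"
    unfolding F_def using cut_vec_in_cbox cut_vec_zero_one
    by (intro face_of_convex_hull_fix_coordinates) blast+
  moreover have xC: "cut_vec E S \<in> ?C" using SV by blast
  then have "cut_vec E S \<in> ?C \<inter> F" unfolding F_def using hull_inc[OF xC] by simp
  moreover have yC: "cut_vec E (sym_diff S D) \<in> ?C" using SV DV by blast
  then have "cut_vec E (sym_diff S D) \<in> ?C \<inter> F"
    unfolding F_def using hull_inc[OF yC] cut_vec_sym_diff_nth_eq_iff[OF sg] by simp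
  moreover note ne
  moreover have "?C \<inter> F \<subseteq> {cut_vec E S, cut_vec E (sym_diff S D)}"
    using cut_vec_agreeing_off_bond[OF sg DV cD cVD] unfolding F_def by auto
  ultimately show ?thesis
    unfolding cut_polytope_def by (rule skel_adj_if_face_meets_in_two)
qed

lemma cut_vec_add_split:
  assumes sg: "simple_graph V E" and disj: "D1 \<inter> D2 = {}"
    and no_edge: "\<And>p q. {p, q} \<in> E \<Longrightarrow> p \<in> D1 \<Longrightarrow> q \<notin> D2"
  shows "cut_vec E S + cut_vec E (sym_diff S (D1 \<union> D2)) =
         cut_vec E (sym_diff S D1) + cut_vec E (sym_diff S D2)"
proof -
  have "(cut_vec E S + cut_vec E (sym_diff S (D1 \<union> D2))) $ e =
        (cut_vec E (sym_diff S D1) + cut_vec E (sym_diff S D2)) $ e" for e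
  proof (cases "e \<in> E")
    case True
    then obtain p q where pq: "e = {p, q}" "p \<noteq> q" "p \<in> V" "q \<in> V"
      by (rule simple_graph_edgeE[OF sg])
    have "\<not> (p \<in> D1 \<and> q \<in> D2)" "\<not> (q \<in> D1 \<and> p \<in> D2)"
      using no_edge[of p q] no_edge[of q p] True pq(1) by (auto simp: insert_commute)
    moreover have "\<not> (p \<in> D1 \<and> p \<in> D2)" "\<not> (q \<in> D1 \<and> q \<in> D2)" using disj by auto
    ultimately show ?thesis
      unfolding vector_add_component cut_vec_edge[OF True pq(1,2)] Un_iff Diff_iff
      by (cases "p \<in> S"; cases "q \<in> S"; cases "p \<in> D1"; cases "q \<in> D1";
          cases "p \<in> D2"; cases "q \<in> D2") simp_all
  qed (simp add: cut_vec_nth)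
  then show ?thesis by (simp add: vec_eq_iff)
qed

text \<open>If D induces a disconnected subgraph, split it into a component D1 and the rest D2: then
  v(S) + v(S \<triangle> D) = v(S \<triangle> D1) + v(S \<triangle> D2), and the vertex v(S \<triangle> D1) is
  neither end, so v(S) and v(S \<triangle> D) are not adjacent.\<close>

lemma not_connected_on_induced_split:
  assumes "\<not> connected_on D (induced_edges E D)"
  obtains D1 D2 x y where "D = D1 \<union> D2" "D1 \<inter> D2 = {}" "x \<in> D1" "y \<in> D2"
    "\<forall>p q. {p, q} \<in> E \<longrightarrow> p \<in> D1 \<longrightarrow> q \<notin> D2"
proof -
  from assms obtain x y where xy: "x \<in> D" "y \<in> D" "\<not> (edge_rel (induced_edges E D))\<^sup>*\<^sup>* x y"
    unfolding connected_on_def by blast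
  define D1 where "D1 = {z\<in>D. (edge_rel (induced_edges E D))\<^sup>*\<^sup>* x z}"
  have "D = D1 \<union> (D - D1)" "D1 \<inter> (D - D1) = {}" unfolding D1_def by auto
  moreover have "x \<in> D1" "y \<in> D - D1" using xy unfolding D1_def by auto
  moreover have "q \<notin> D - D1" if "{p, q} \<in> E" "p \<in> D1" for p q
  proof
    assume q: "q \<in> D - D1"
    with that have "edge_rel (induced_edges E D) p q" unfolding D1_def by auto
    moreover have "(edge_rel (induced_edges E D))\<^sup>*\<^sup>* x p" using that(2) unfolding D1_def by simp
    ultimately have "(edge_rel (induced_edges E D))\<^sup>*\<^sup>* x q" by (simp add: rtranclp.rtrancl_into_rtrancl)
    with q show False unfolding D1_def by simp
  qed
  ultimately show ?thesis by (intro that) blast+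
qed

lemma skel_adj_cut_vec_imp_connected:
  assumes sg: "simple_graph V E" and cV: "connected_on V E" and SV: "S \<subseteq> V" and DV: "D \<subseteq> V"
    and adj: "skel_adj (cut_polytope V E) (cut_vec E S) (cut_vec E (sym_diff S D))"
  shows "connected_on D (induced_edges E D)"
proof (rule ccontr)
  assume "\<not> connected_on D (induced_edges E D)"
  then obtain D1 D2 x y where D: "D = D1 \<union> D2" "D1 \<inter> D2 = {}" and x1: "x \<in> D1" and y2: "y \<in> D2"
    and no_edge: "\<forall>p q. {p, q} \<in> E \<longrightarrow> p \<in> D1 \<longrightarrow> q \<notin> D2"
    by (rule not_connected_on_induced_split)
  have xy: "x \<in> D" "y \<in> D" using D x1 y2 by auto
  let ?a = "cut_vec E (sym_diff S D1)"
  have sum: "cut_vec E S + cut_vec E (sym_diff S D) = ?a + cut_vec E (sym_diff S D2)"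
    unfolding D(1) by (rule cut_vec_add_split[OF sg D(2)]) (use no_edge in blast)
  have "sym_diff S D1 \<subseteq> V" "sym_diff S D2 \<subseteq> V" using SV DV D(1) by auto
  then have vertices: "?a \<in> {cut_vec E S | S. S \<subseteq> V}" "cut_vec E (sym_diff S D2) \<in> {cut_vec E S | S. S \<subseteq> V}"
    by blast+
  then have "?a extreme_point_of cut_polytope V E"
    unfolding skel_vertices_cut_polytope[symmetric] skel_vertices_def by simp
  moreover have "cut_vec E (sym_diff S D2) \<in> cut_polytope V E"
    unfolding cut_polytope_def using vertices(2) by (rule hull_inc)
  ultimately have "?a = cut_vec E S \<or> ?a = cut_vec E (sym_diff S D)"
    using skel_adj_sum_eq_vertex[OF adj _ _ sum] by blast
  moreover have "?a \<noteq> cut_vec E S"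
  proof -
    have r: "(edge_rel E)\<^sup>*\<^sup>* x y" using connected_onD[OF cV] xy DV by blast
    have "y \<notin> D1" using y2 D(2) by blast
    then obtain p q where pq: "{p, q} \<in> E" "p \<in> D1" "q \<notin> D1"
      by (rule edge_rel_rtranclp_crossing_edge[OF r x1])
    then have "p \<noteq> q" by auto
    with pq have "{p, q} \<in> cut_edges E D1" using card_Int_doubleton_eq_1[of p q D1] by simp
    with cut_vec_sym_diff_nth_eq_iff[OF sg pq(1), of S D1]
    have "?a $ {p, q} \<noteq> cut_vec E S $ {p, q}" by simp
    then show ?thesis by auto
  qed
  moreover have "?a \<noteq> cut_vec E (sym_diff S D)"
  proof -
    have r: "(edge_rel E)\<^sup>*\<^sup>* y x" using connected_onD[OF cV] xy DV by blast
    have "x \<notin> D2" using x1 D(2) by blast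
    then obtain p q where pq: "{p, q} \<in> E" "p \<in> D2" "q \<notin> D2"
      by (rule edge_rel_rtranclp_crossing_edge[OF r y2])
    then have "p \<noteq> q" by auto
    with pq have "{p, q} \<in> cut_edges E D2" using card_Int_doubleton_eq_1[of p q D2] by simp
    with cut_vec_sym_diff_nth_eq_iff[OF sg pq(1), of "sym_diff S D1" D2]
    have "cut_vec E (sym_diff (sym_diff S D1) D2) $ {p, q} \<noteq> ?a $ {p, q}" by simp
    moreover have "sym_diff (sym_diff S D1) D2 = sym_diff S D" using D by auto
    ultimately show ?thesis by auto
  qed
  ultimately show False by blast
qed

lemma skel_adj_cut_vec_card_diff_le:
  assumes at: "almost_tree k V E" and SV: "S \<subseteq> V" and TV: "T \<subseteq> V"
    and adj: "skel_adj (cut_polytope V E) (cut_vec E S) (cut_vec E T)"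
  shows "card {e\<in>E. cut_vec E S $ e \<noteq> cut_vec E T $ e} \<le> k + 1"
proof -
  have sg: "simple_graph V E" and cV: "connected_on V E"
    using at unfolding almost_tree_def connected_graph_def by auto
  define D where "D = sym_diff S T"
  have DV: "D \<subseteq> V" using SV TV unfolding D_def by auto
  have T: "T = sym_diff S D" unfolding D_def by auto
  have "cut_vec E (sym_diff S (V - D)) = cut_vec E (V - sym_diff S D)"
    using SV DV by (intro cut_vec_cong[OF sg]) auto
  then have T': "cut_vec E T = cut_vec E (sym_diff S (V - D))"
    unfolding cut_vec_Diff[OF sg] T[symmetric] ..
  have "connected_on D (induced_edges E D)"
    using skel_adj_cut_vec_imp_connected[OF sg cV SV DV] adj T by simp
  moreover have "connected_on (V - D) (induced_edges E (V - D))"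
    using skel_adj_cut_vec_imp_connected[OF sg cV SV, of "V - D"] adj T' by simp
  moreover have "e \<in> cut_edges E D \<longleftrightarrow> e \<in> E \<and> cut_vec E S $ e \<noteq> cut_vec E T $ e" for e
    using cut_vec_sym_diff_nth_eq_iff[OF sg, of e S D] unfolding T by auto
  then have "{e\<in>E. cut_vec E S $ e \<noteq> cut_vec E T $ e} = cut_edges E D" by blast
  ultimately show ?thesis using card_cut_edges_le[OF at DV] by simp
qed

section \<open>Short paths in the skeleton\<close>

definition connected_split :: "'v set set \<Rightarrow> 'v set \<Rightarrow> 'v set \<Rightarrow> bool" where
  "connected_split E W C \<longleftrightarrow>
     C \<subseteq> W \<and> connected_on C (induced_edges E C) \<and> connected_on (W - C) (induced_edges E (W - C))"

definition generated_by_splits :: "'v set set \<Rightarrow> 'v set \<Rightarrow> bool" where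
  "generated_by_splits E W \<longleftrightarrow> (\<forall>U \<subseteq> W. \<exists>Cs. length Cs + 1 \<le> card W \<and>
     (\<forall>C\<in>set Cs. connected_split E W C) \<and> (foldr sym_diff Cs {} = U \<or> foldr sym_diff Cs {} = W - U))"

lemma connected_split_insert:
  assumes "connected_split E W C" "w \<notin> W" "b \<in> W" "{w, b} \<in> E"
  defines "C' \<equiv> if b \<in> C then insert w C else C"
  shows "connected_split E (insert w W) C'" "C' \<inter> W = C"
proof -
  have C: "C \<subseteq> W" "connected_on C (induced_edges E C)" "connected_on (W - C) (induced_edges E (W - C))"
    using assms(1) unfolding connected_split_def by auto
  show "connected_split E (insert w W) C'"
  proof (cases "b \<in> C")
    case True
    have "insert w W - insert w C = W - C" using assms(2) by auto
    with True C connected_on_insert[OF C(2) True assms(4)] show ?thesis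
      unfolding connected_split_def C'_def by auto
  next
    case False
    with assms(3) have "b \<in> W - C" by simp
    from connected_on_insert[OF C(3) this assms(4)]
    have "connected_on (insert w (W - C)) (induced_edges E (insert w (W - C)))" .
    moreover have "insert w (W - C) = insert w W - C" using assms(2) C(1) by auto
    ultimately show ?thesis using False C unfolding connected_split_def C'_def by auto
  qed
  show "C' \<inter> W = C" using C(1) assms(2) unfolding C'_def by auto
qed

lemma foldr_sym_diff_map_restrict:
  assumes "\<forall>C\<in>set Cs. L C \<inter> W = C"
  shows "foldr sym_diff (map L Cs) {} \<inter> W = foldr sym_diff Cs {}"
  using assms by (induction Cs) auto

lemma foldr_sym_diff_subset: "\<forall>C\<in>set Cs. C \<subseteq> W \<Longrightarrow> foldr sym_diff Cs {} \<subseteq> W"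
  by (induction Cs) auto

text \<open>Lift each split of W to W + w by putting w on the side of its neighbour b; if w ends up
  on the wrong side, add the split {w}.\<close>

lemma generated_by_splits_insert:
  assumes gen: "generated_by_splits E W" and cW: "connected_on W (induced_edges E W)"
    and w: "w \<notin> W" and b: "b \<in> W" and wb: "{w, b} \<in> E" and fin: "finite W"
  shows "generated_by_splits E (insert w W)"
  unfolding generated_by_splits_def
proof (intro allI impI)
  fix U assume U: "U \<subseteq> insert w W"
  let ?W' = "insert w W"
  obtain Cs where Cs: "length Cs + 1 \<le> card W" "\<forall>C\<in>set Cs. connected_split E W C"
    "foldr sym_diff Cs {} = U \<inter> W \<or> foldr sym_diff Cs {} = W - U \<inter> W"
    using gen unfolding generated_by_splits_def by (meson inf_le2)
  define L where "L C = (if b \<in> C then insert w C else C)" for C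
  have L: "connected_split E ?W' (L C)" "L C \<inter> W = C" if "C \<in> set Cs" for C
    using connected_split_insert[OF _ w b wb] Cs(2) that unfolding L_def by blast+
  define D where "D = foldr sym_diff (map L Cs) {}"
  define target where "target = (if foldr sym_diff Cs {} = U \<inter> W then U else ?W' - U)"
  have DW: "D \<inter> W = target \<inter> W"
    using foldr_sym_diff_map_restrict[of Cs L W] L(2) Cs(3) unfolding D_def target_def by auto
  have Dsub: "D \<subseteq> ?W'"
    unfolding D_def using L(1) by (intro foldr_sym_diff_subset) (auto simp: connected_split_def)
  have tsub: "target \<subseteq> ?W'" unfolding target_def using U by auto
  have splits: "\<forall>C\<in>set (map L Cs). connected_split E ?W' C" using L(1) by auto
  have single: "connected_split E ?W' {w}"
    using w cW connected_on_singleton unfolding connected_split_def by (simp add: insert_Diff_if)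
  have len: "length (map L Cs) + 1 < card ?W'" using Cs(1) w fin by simp
  have target: "target = U \<or> target = ?W' - U" unfolding target_def by auto
  show "\<exists>Cs. length Cs + 1 \<le> card ?W' \<and> (\<forall>C\<in>set Cs. connected_split E ?W' C) \<and>
      (foldr sym_diff Cs {} = U \<or> foldr sym_diff Cs {} = ?W' - U)"
  proof (cases "(w \<in> D) = (w \<in> target)")
    case True
    have "D = target"
    proof (rule set_eqI)
      fix x show "x \<in> D \<longleftrightarrow> x \<in> target"
        using DW Dsub tsub True by (cases "x = w"; cases "x \<in> W") blast+
    qed
    with len splits target show ?thesis unfolding D_def by (intro exI[of _ "map L Cs"]) auto
  next
    case False
    have "sym_diff {w} D = target"
    proof (rule set_eqI)
      fix x show "x \<in> sym_diff {w} D \<longleftrightarrow> x \<in> target"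
        using DW Dsub tsub False w by (cases "x = w"; cases "x \<in> W") blast+
    qed
    with len splits single target show ?thesis
      unfolding D_def by (intro exI[of _ "{w} # map L Cs"]) auto
  qed
qed

text \<open>Grow a connected vertex set one neighbour at a time.\<close>

lemma generated_by_splits_connected:
  assumes sg: "simple_graph V E" and cV: "connected_on V E" and ne: "V \<noteq> {}"
  shows "generated_by_splits E V"
proof -
  have finV: "finite V" using simple_graph_finite[OF sg] .
  have "\<exists>W \<subseteq> V. card W = k + 1 \<and> connected_on W (induced_edges E W) \<and> generated_by_splits E W"
    if "k + 1 \<le> card V" for k
    using that
  proof (induction k)
    case 0
    obtain r where r: "r \<in> V" using ne by blast
    have "generated_by_splits E {r}"
      unfolding generated_by_splits_def
      by (intro allI impI exI[of _ "[]"]) (auto simp: subset_singleton_iff)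
    then show ?case using r connected_on_singleton by (intro exI[of _ "{r}"]) auto
  next
    case (Suc k)
    then obtain W where W: "W \<subseteq> V" "card W = k + 1" "connected_on W (induced_edges E W)"
      "generated_by_splits E W" by auto
    have finW: "finite W" using W(1) finV by (rule finite_subset)
    have "W \<noteq> V" using W(2) Suc.prems by auto
    then obtain y where y: "y \<in> V" "y \<notin> W" using W(1) by blast
    have "W \<noteq> {}" using W(2) by auto
    then obtain x where x: "x \<in> W" by blast
    have "(edge_rel E)\<^sup>*\<^sup>* x y" using connected_onD[OF cV _ y(1)] x W(1) by blast
    then obtain b w where bw: "{b, w} \<in> E" "b \<in> W" "w \<notin> W"
      by (rule edge_rel_rtranclp_crossing_edge[OF _ x y(2)])
    have wb: "{w, b} \<in> E" using bw(1) by (simp add: insert_commute)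
    have "insert w W \<subseteq> V" using W(1) simple_graph_edge_subset[OF sg bw(1)] by simp
    moreover have "card (insert w W) = Suc k + 1" using W(2) bw(3) finW by simp
    moreover have "connected_on (insert w W) (induced_edges E (insert w W))"
      by (rule connected_on_insert[OF W(3) bw(2) wb])
    moreover have "generated_by_splits E (insert w W)"
      by (rule generated_by_splits_insert[OF W(4) W(3) bw(3) bw(2) wb finW])
    ultimately show ?case by blast
  qed
  moreover have "card V - 1 + 1 \<le> card V" using ne finV by (simp add: card_gt_0_iff)
  ultimately obtain W where W: "W \<subseteq> V" "card W = card V - 1 + 1" "generated_by_splits E W"
    by blast
  then have "card W = card V" using ne finV by (simp add: card_gt_0_iff)
  with W(1) finV have "W = V" by (simp add: card_subset_eq)
  with W(3) show ?thesis by simp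
qed

lemma skel_path_sym_diff_splits:
  fixes V :: "'v::finite set"
  assumes sg: "simple_graph V E"
  shows "\<forall>C\<in>set Cs. connected_split E V C \<Longrightarrow> S \<subseteq> V \<Longrightarrow>
    \<exists>m \<le> length Cs. (skel_adj (cut_polytope V E) ^^ m) (cut_vec E S) (cut_vec E (sym_diff S (foldr sym_diff Cs {})))"
proof (induction Cs arbitrary: S)
  case Nil
  then show ?case by (intro exI[of _ 0]) simp
next
  case (Cons C Cs)
  have C: "C \<subseteq> V" "connected_on C (induced_edges E C)" "connected_on (V - C) (induced_edges E (V - C))"
    using Cons.prems(1) unfolding connected_split_def by auto
  have "sym_diff S C \<subseteq> V" using Cons.prems(2) C(1) by auto
  moreover have "\<forall>C\<in>set Cs. connected_split E V C" using Cons.prems(1) by simp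
  ultimately obtain m where m: "m \<le> length Cs"
    "(skel_adj (cut_polytope V E) ^^ m) (cut_vec E (sym_diff S C))
       (cut_vec E (sym_diff (sym_diff S C) (foldr sym_diff Cs {})))"
    using Cons.IH by blast
  have assoc: "sym_diff (sym_diff S C) (foldr sym_diff Cs {}) = sym_diff S (foldr sym_diff (C # Cs) {})"
    by auto
  show ?case
  proof (cases "cut_vec E S = cut_vec E (sym_diff S C)")
    case True
    then show ?thesis using m assoc by (intro exI[of _ m]) auto
  next
    case False
    with skel_adj_cut_vec_sym_diff[OF sg Cons.prems(2) C]
    have "skel_adj (cut_polytope V E) (cut_vec E S) (cut_vec E (sym_diff S C))" .
    from relpowp_Suc_I2[OF this m(2)] show ?thesis using m(1) assoc by (intro exI[of _ "Suc m"]) auto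
  qed
qed

lemma skel_path_cut_vec_le:
  fixes V :: "'v::finite set"
  assumes sg: "simple_graph V E" and cV: "connected_on V E" and ne: "V \<noteq> {}"
    and "S \<subseteq> V" "T \<subseteq> V"
  shows "\<exists>m \<le> card V - 1. (skel_adj (cut_polytope V E) ^^ m) (cut_vec E S) (cut_vec E T)"
proof -
  have "sym_diff S T \<subseteq> V" using assms(4,5) by auto
  then obtain Cs where Cs: "length Cs + 1 \<le> card V" "\<forall>C\<in>set Cs. connected_split E V C"
    "foldr sym_diff Cs {} = sym_diff S T \<or> foldr sym_diff Cs {} = V - sym_diff S T"
    using generated_by_splits_connected[OF sg cV ne] unfolding generated_by_splits_def by blast
  obtain m where m: "m \<le> length Cs"
    "(skel_adj (cut_polytope V E) ^^ m) (cut_vec E S) (cut_vec E (sym_diff S (foldr sym_diff Cs {})))"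
    using skel_path_sym_diff_splits[OF sg Cs(2) assms(4)] by blast
  have "cut_vec E (sym_diff S (foldr sym_diff Cs {})) = cut_vec E T"
    using Cs(3)
  proof
    assume "foldr sym_diff Cs {} = sym_diff S T"
    then show ?thesis by (intro cut_vec_cong[OF sg]) auto
  next
    assume "foldr sym_diff Cs {} = V - sym_diff S T"
    then have "cut_vec E (sym_diff S (foldr sym_diff Cs {})) = cut_vec E (V - T)"
      using assms(4,5) by (intro cut_vec_cong[OF sg]) auto
    then show ?thesis by (simp add: cut_vec_Diff[OF sg])
  qed
  with m Cs(1) show ?thesis by (intro exI[of _ m]) auto
qed

lemma skel_dist_le: "(skel_adj P ^^ n) x y \<Longrightarrow> skel_dist P x y \<le> n"
  unfolding skel_dist_def by (rule Least_le)

lemma skel_dist_path: "(skel_adj P ^^ n) x y \<Longrightarrow> (skel_adj P ^^ skel_dist P x y) x y"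
  unfolding skel_dist_def by (rule LeastI)

lemma finite_skel_dists:
  assumes "finite (skel_vertices P)"
  shows "finite {skel_dist P x y | x y. x \<in> skel_vertices P \<and> y \<in> skel_vertices P}"
proof -
  have "{skel_dist P x y | x y. x \<in> skel_vertices P \<and> y \<in> skel_vertices P} =
      case_prod (skel_dist P) ` (skel_vertices P \<times> skel_vertices P)" by auto
  with assms show ?thesis by simp
qed

lemma skel_dist_le_skel_diameter:
  "finite (skel_vertices P) \<Longrightarrow> x \<in> skel_vertices P \<Longrightarrow> y \<in> skel_vertices P \<Longrightarrow>
    skel_dist P x y \<le> skel_diameter P"
  unfolding skel_diameter_def by (rule Max_ge[OF finite_skel_dists]) auto

lemma skel_diameter_le:
  assumes "finite (skel_vertices P)" "skel_vertices P \<noteq> {}"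
    and "\<And>x y. x \<in> skel_vertices P \<Longrightarrow> y \<in> skel_vertices P \<Longrightarrow> skel_dist P x y \<le> d"
  shows "skel_diameter P \<le> d"
  unfolding skel_diameter_def
proof (rule Max.boundedI[OF finite_skel_dists[OF assms(1)]])
  from assms(2) obtain v where "v \<in> skel_vertices P" by blast
  then show "{skel_dist P x y | x y. x \<in> skel_vertices P \<and> y \<in> skel_vertices P} \<noteq> {}" by blast
qed (use assms(3) in blast)

lemma finite_skel_vertices_cut_polytope:
  "finite V \<Longrightarrow> finite (skel_vertices (cut_polytope V E))"
  unfolding skel_vertices_cut_polytope by (simp add: setcompr_eq_image)

lemma cut_edges_eq_cut_vec_one: "cut_edges E S = {e\<in>E. cut_vec E S $ e = 1}"
  by (auto simp: cut_vec_nth)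

text \<open>Each step along the skeleton changes at most k + 1 coordinates.\<close>

lemma skel_path_card_cut_edges_le:
  assumes at: "almost_tree k V E"
  shows "(skel_adj (cut_polytope V E) ^^ n) (cut_vec E S) y \<Longrightarrow> S \<subseteq> V \<Longrightarrow>
    \<exists>T \<subseteq> V. y = cut_vec E T \<and> card (cut_edges E T) \<le> card (cut_edges E S) + (k + 1) * n"
proof (induction n arbitrary: y)
  case (Suc n)
  from Suc.prems(1) obtain z where z: "(skel_adj (cut_polytope V E) ^^ n) (cut_vec E S) z"
    "skel_adj (cut_polytope V E) z y" by auto
  obtain R where R: "R \<subseteq> V" "z = cut_vec E R"
    "card (cut_edges E R) \<le> card (cut_edges E S) + (k + 1) * n"
    using Suc.IH[OF z(1) Suc.prems(2)] by blast
  obtain T where T: "T \<subseteq> V" "y = cut_vec E T"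
    using skel_adj_cut_polytope_imp_cut_vec(2)[OF z(2)] by blast
  have "finite E"
    using at simple_graph_finite_edges unfolding almost_tree_def connected_graph_def by blast
  have "cut_edges E T \<subseteq> cut_edges E R \<union> {e\<in>E. cut_vec E R $ e \<noteq> cut_vec E T $ e}"
    unfolding cut_edges_eq_cut_vec_one by auto
  then have "card (cut_edges E T) \<le> card (cut_edges E R \<union> {e\<in>E. cut_vec E R $ e \<noteq> cut_vec E T $ e})"
    using \<open>finite E\<close> by (intro card_mono) auto
  also have "\<dots> \<le> card (cut_edges E R) + card {e\<in>E. cut_vec E R $ e \<noteq> cut_vec E T $ e}"
    by (rule card_Un_le)
  also have "card {e\<in>E. cut_vec E R $ e \<noteq> cut_vec E T $ e} \<le> k + 1"
    using skel_adj_cut_vec_card_diff_le[OF at R(1) T(1)] z(2) R(2) T(2) by simp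
  finally show ?case using R(3) T by (intro exI[of _ T]) auto
qed auto

lemma cut_polytope_skel_dist_le:
  fixes V :: "'v::finite set"
  assumes "connected_graph V E" "x \<in> skel_vertices (cut_polytope V E)" "y \<in> skel_vertices (cut_polytope V E)"
  shows "skel_dist (cut_polytope V E) x y \<le> card V - 1"
proof -
  have G: "simple_graph V E" "connected_on V E" "V \<noteq> {}"
    using assms(1) unfolding connected_graph_def by auto
  obtain S T where ST: "S \<subseteq> V" "T \<subseteq> V" "x = cut_vec E S" "y = cut_vec E T"
    using assms(2,3) unfolding skel_vertices_cut_polytope by blast
  obtain m where "m \<le> card V - 1" "(skel_adj (cut_polytope V E) ^^ m) x y"
    using skel_path_cut_vec_le[OF G ST(1,2)] ST(3,4) by blast
  then show ?thesis using skel_dist_le[of m _ x y] by fastforce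
qed

text \<open>Between the empty cut and a cut with at least |V| - 1 edges, a path needs
  (|V| - 1) / (k + 1) steps.\<close>

lemma cut_polytope_far_vertices:
  fixes V :: "'v::finite set"
  assumes at: "almost_tree k V E"
  obtains x y where "x \<in> skel_vertices (cut_polytope V E)" "y \<in> skel_vertices (cut_polytope V E)"
    "card V - 1 \<le> (k + 1) * skel_dist (cut_polytope V E) x y"
proof -
  let ?P = "cut_polytope V E"
  have cg: "connected_graph V E" using at unfolding almost_tree_def by blast
  then have sg: "simple_graph V E" and cV: "connected_on V E" and ne: "V \<noteq> {}"
    unfolding connected_graph_def by auto
  obtain r where r: "r \<in> V" using ne by blast
  obtain M where M: "card V - 1 \<le> card (cut_edges E M)"
    using exists_large_cut[OF simple_graph_finite[OF sg] r cV] simple_graph_edge_subset[OF sg]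
      simple_graph_finite_edges[OF sg] by blast
  have "cut_vec E (M \<inter> V) = cut_vec E M" by (rule cut_vec_cong[OF sg]) auto
  then have cutMV: "cut_edges E (M \<inter> V) = cut_edges E M"
    unfolding cut_edges_eq_cut_vec_one by simp
  let ?x = "cut_vec E {}" and ?y = "cut_vec E (M \<inter> V)"
  have "(skel_adj ?P ^^ skel_dist ?P ?x ?y) ?x ?y"
    using skel_path_cut_vec_le[OF sg cV ne, of "{}" "M \<inter> V"] skel_dist_path by blast
  then obtain T where T: "?y = cut_vec E T"
    "card (cut_edges E T) \<le> card (cut_edges E {}) + (k + 1) * skel_dist ?P ?x ?y"
    using skel_path_card_cut_edges_le[OF at] by blast
  from T(1) have "cut_edges E T = cut_edges E M"
    using cutMV unfolding cut_edges_eq_cut_vec_one by simp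
  with T(2) M have "card V - 1 \<le> (k + 1) * skel_dist ?P ?x ?y" by simp
  moreover have "?x \<in> skel_vertices ?P" "?y \<in> skel_vertices ?P"
    unfolding skel_vertices_cut_polytope by blast+
  ultimately show ?thesis by (intro that)
qed

theorem theorem6:
  fixes V :: "'v::finite set" and E :: "'v set set"
  assumes "almost_tree 2 V E"
  shows "card V div 3 \<le> skel_diameter (cut_polytope V E) \<and>
         skel_diameter (cut_polytope V E) \<le> card V - 1"
proof
  let ?P = "cut_polytope V E"
  have cg: "connected_graph V E" using assms unfolding almost_tree_def by blast
  then have fin: "finite (skel_vertices ?P)"
    unfolding connected_graph_def simple_graph_def by (simp add: finite_skel_vertices_cut_polytope)
  obtain x y where xy: "x \<in> skel_vertices ?P" "y \<in> skel_vertices ?P"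
    "card V - 1 \<le> (2 + 1) * skel_dist ?P x y"
    by (rule cut_polytope_far_vertices[OF assms])
  have "card V div 3 \<le> skel_dist ?P x y" using xy(3) by simp
  also have "\<dots> \<le> skel_diameter ?P" using skel_dist_le_skel_diameter[OF fin xy(1,2)] .
  finally show "card V div 3 \<le> skel_diameter ?P" .
  show "skel_diameter ?P \<le> card V - 1"
    using fin xy(1) cut_polytope_skel_dist_le[OF cg] by (intro skel_diameter_le) auto
qed

end
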